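(* Let $F$ be a field of characteristic $p>0$, let $S\subset F$ be nonempty with $\mathrm{pdeg}(S)=k$ finite, and let $\{a_1,\ldots,a_k\}$ be a $p$-basis of $F^p(S)$. For $r\in\{1,\ldots,k\}$ put $t=k-r+1$. Then $$\operatorname{ann}\Omega^n_F\Big(\textstyle\bigwedge^r\mathrm{d} S\Big)=\sum_{\substack{\{i_1,\ldots,i_t\}\subset\{1,\ldots,k\}\\ i_1<\cdots<i_t}}\mathrm{d} a_{i_1}\wedge\cdots\wedge\mathrm{d} a_{i_t}\wedge\Omega^{n-t}(F),$$ and for $r>k$ we have $\operatorname{ann}\Omega^n_F(\bigwedge^r\mathrm{d} S)=\Omega^n(F)$.
   Context: $F$ is a field of characteristic $p>0$. $\Omega^1(F)$ is the $F$-vector space generated by symbols $\mathrm{d} a$ ($a\in F$) with $\mathrm{d}(a+b)=\mathrm{d} a+\mathrm{d} b$, $\mathrm{d}(ab)=a\,\mathrm{d} b+b\,\mathrm{d} a$; $\Omega^n(F)=\bigwedge^n_F\Omega^1(F)$ for $n\geq1$, $\Omega^0(F)=F$, $\Omega^n(F)=0$ for $n<0$. A subset $A\subset F$ is $p$-independent if $[F^p(a_1,\ldots,a_m):F^p]=p^m$ for all finite $\{a_1,\ldots,a_m\}\subset A$; for $C\subset F$, $\mathrm{pdeg}(C)=\log_p[F^p(C):F^p]$; a $p$-basis of a field $L$ with $F^p\subseteq L\subseteq F$ is a $p$-independent $A\subset L$ with $F^p(A)=L$. For nonempty $S\subset F$, $\bigwedge^r\mathrm{d} S=\{\mathrm{d}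 s_1\wedge\cdots\wedge\mathrm{d} s_r\mid s_i\in S\}\subset\Omega^r(F)$. For nonempty $U\subset\Omega^r(F)$, $\operatorname{ann}\Omega^n_F(U)=\{\omega\in\Omega^n(F)\mid\omega\wedge u=0\text{ for all }u\in U\}$. *)

theory Defs
  imports Main
begin

definition subfield :: "'a::field set \<Rightarrow> bool" where
  "subfield K \<longleftrightarrow> 0 \<in> K \<and> 1 \<in> K \<and> (\<forall>x\<in>K. \<forall>y\<in>K. x + y \<in> K \<and> x - y \<in> K \<and> x * y \<in> K)
     \<and> (\<forall>x\<in>K. inverse x \<in> K)"

definition gen_field :: "'a::field set \<Rightarrow> 'a set" where
  "gen_field X = \<Inter>{K. subfield K \<and> X \<subseteq> K}"

definition Fp :: "'a::field set" where
  "Fp = {x ^ CHAR('a) | x. True}"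

definition Fp_adj :: "'a::field set \<Rightarrow> 'a set" where
  "Fp_adj C = gen_field (Fp \<union> C)"

definition lin_indep_over :: "'a::field set \<Rightarrow> 'a set \<Rightarrow> bool" where
  "lin_indep_over K B \<longleftrightarrow> (\<forall>B0 c. finite B0 \<and> B0 \<subseteq> B \<and> (\<forall>b\<in>B0. c b \<in> K)
      \<and> (\<Sum>b\<in>B0. c b * b) = 0 \<longrightarrow> (\<forall>b\<in>B0. c b = 0))"

definition span_over :: "'a::field set \<Rightarrow> 'a set \<Rightarrow> 'a set" where
  "span_over K B = {(\<Sum>b\<in>B0. c b * b) | B0 c. finite B0 \<and> B0 \<subseteq> B \<and> (\<forall>b\<in>B0. c b \<in> K)}"

definition ext_degree_is :: "'a::field set \<Rightarrow> 'a set \<Rightarrow> nat \<Rightarrow> bool" where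
  "ext_degree_is K L d \<longleftrightarrow> (\<exists>B. finite B \<and> card B = d \<and> B \<subseteq> L \<and> lin_indep_over K B \<and> span_over K B = L)"

definition p_independent :: "'a::field set \<Rightarrow> bool" where
  "p_independent A \<longleftrightarrow> (\<forall>A0. finite A0 \<and> A0 \<subseteq> A \<longrightarrow>
      ext_degree_is (Fp :: 'a set) (Fp_adj A0) (CHAR('a) ^ card A0))"

definition pdeg_eq :: "'a::field set \<Rightarrow> nat \<Rightarrow> bool" where
  "pdeg_eq C k \<longleftrightarrow> ext_degree_is (Fp :: 'a set) (Fp_adj C) (CHAR('a) ^ k)"

definition p_basis :: "'a::field set \<Rightarrow> 'a set \<Rightarrow> bool" where
  "p_basis L A \<longleftrightarrow> A \<subseteq> L \<and> p_independent A \<and> Fp_adj A = L"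

text \<open>
  Omega^*(F) is realized as the quotient of the free F-vector space on words
  [a1,...,an] (standing for da1 \<and> ... \<and> dan; i.e. the tensor algebra of the free
  F-module on the symbols da) by the two-sided ideal generated by
  d(a+b) - da - db, d(ab) - a db - b da, and da \<and> da.
  Elements are represented by functions  'a list \<Rightarrow> 'a  (coefficients);
  the product is concatenation of words.
\<close>

definition word :: "'a list \<Rightarrow> ('a list \<Rightarrow> 'a::field)" where
  "word u = (\<lambda>w. if w = u then 1 else 0)"

definition fmul :: "('a list \<Rightarrow> 'a::field) \<Rightarrow> ('a list \<Rightarrow> 'a) \<Rightarrow> ('a list \<Rightarrow> 'a)" where
  "fmul f g = (\<lambda>w. \<Sum>i\<le>length w. f (take i w) * g (drop i w))"

definition gens :: "('a list \<Rightarrow> 'a::field) set" where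
  "gens = {(\<lambda>w. word [a + b] w - word [a] w - word [b] w) | a b. True}
        \<union> {(\<lambda>w. word [a * b] w - a * word [b] w - b * word [a] w) | a b. True}
        \<union> {word [a, a] | a. True}"

inductive_set rels :: "('a list \<Rightarrow> 'a::field) set" where
  zero: "(\<lambda>_. 0) \<in> rels"
| add: "f \<in> rels \<Longrightarrow> g \<in> rels \<Longrightarrow> (\<lambda>w. f w + g w) \<in> rels"
| smul: "f \<in> rels \<Longrightarrow> (\<lambda>w. c * f w) \<in> rels"
| gen: "g \<in> gens \<Longrightarrow> fmul (word u) (fmul g (word v)) \<in> rels"

definition omega_eq :: "('a list \<Rightarrow> 'a::field) \<Rightarrow> ('a list \<Rightarrow> 'a) \<Rightarrow> bool" where
  "omega_eq f g \<longleftrightarrow> (\<lambda>w. f w - g w) \<in> rels"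

definition Om :: "int \<Rightarrow> ('a list \<Rightarrow> 'a::field) set" where
  "Om m = (if m < 0 then {\<lambda>_. 0}
           else {f. finite {w. f w \<noteq> 0} \<and> (\<forall>w. f w \<noteq> 0 \<longrightarrow> int (length w) = m)})"

definition wedge_dS :: "nat \<Rightarrow> 'a::field set \<Rightarrow> ('a list \<Rightarrow> 'a) set" where
  "wedge_dS r S = {word ss | ss. length ss = r \<and> set ss \<subseteq> S}"

definition in_ann :: "int \<Rightarrow> ('a list \<Rightarrow> 'a::field) set \<Rightarrow> ('a list \<Rightarrow> 'a) \<Rightarrow> bool" where
  "in_ann n U \<omega> \<longleftrightarrow> \<omega> \<in> Om n \<and> (\<forall>u\<in>U. omega_eq (fmul \<omega> u) (\<lambda>_. 0))"

definition in_sum_part :: "int \<Rightarrow> (nat \<Rightarrow> 'a::field) \<Rightarrow> nat \<Rightarrow> nat \<Rightarrow> ('a list \<Rightarrow> 'a) \<Rightarrow> bool" where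
  "in_sum_part n a k t \<omega> \<longleftrightarrow> \<omega> \<in> Om n \<and>
     (\<exists>\<eta>. (\<forall>I. I \<subseteq> {1..k} \<and> card I = t \<longrightarrow> \<eta> I \<in> Om (n - int t)) \<and>
        omega_eq \<omega> (\<lambda>w. \<Sum>I\<in>{I. I \<subseteq> {1..k} \<and> card I = t}.
                       fmul (word (map a (sorted_list_of_set I))) (\<eta> I) w))"

end

(* Two facts about a field F of characteristic p drive the proof.

   (1) Derivations separate p-independent elements: if c_1, ..., c_m are p-independent there are
   derivations D_i of F with D_i c_j = \<delta>_ij. Since every x satisfies x^p \<in> F^p, the minimal
   polynomial of x \<notin> K over a subfield K \<supseteq> F^p is X^p - x^p, so a derivation of K extends to K(x)
   with any prescribed value at x; Zorn's lemma extends it to all of F.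

   (2) Evaluating dw_1 \<and> ... \<and> dw_n on derivations D_1, ..., D_n as det (D_i w_j) respects all the
   defining relations of \<Omega>(F); with (1) this shows that the wedges dc_L, L strictly increasing,
   are linearly independent.

   Extend a_1, ..., a_k to such a family c containing the letters of \<omega> in its F^p-closure and
   write \<omega> = \<Sum> \<mu>_L dc_L. Since F^p(S) = F^p(a_1, ..., a_k), the wedges of r elements of dS span
   the same space as the da_K with K an r-subset of {1..k}, and \<omega> \<and> da_K = 0 kills exactly the
   coefficients \<mu>_L with L disjoint from K. So \<mu>_L \<noteq> 0 forces L to meet every r-subset of {1..k},
   i.e. to contain at least t = k - r + 1 of the indices 1..k, which come first in L. Conversely
   da_I \<and> \<eta> \<and> ds_1 \<and> ... \<and> ds_r is a wedge of k + 1 elements of the span of da_1, ..., da_k, hence 0;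
   for r > k the same count shows that every r-fold wedge of dS vanishes. *)

theory Submission
  imports Defs "HOL-Computational_Algebra.Polynomial" "HOL-Computational_Algebra.Primes" "Jordan_Normal_Form.Determinant"
begin

section \<open>Subfields and the field of p-th powers\<close>

lemma subfield_UNIV: "subfield (UNIV :: 'a::field set)"
  unfolding subfield_def by simp

lemma gen_field_subfield: "subfield (gen_field X)"
  unfolding gen_field_def subfield_def by auto

lemma gen_field_sup: "X \<subseteq> gen_field X"
  unfolding gen_field_def by auto

lemma gen_field_least: "subfield K \<Longrightarrow> X \<subseteq> K \<Longrightarrow> gen_field X \<subseteq> K"
  unfolding gen_field_def by auto

lemma subfield_0: "subfield K \<Longrightarrow> 0 \<in> K" unfolding subfield_def by blast
lemma subfield_1: "subfield K \<Longrightarrow> 1 \<in> K" unfolding subfield_def by blast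
lemma subfield_add: "subfield K \<Longrightarrow> x \<in> K \<Longrightarrow> y \<in> K \<Longrightarrow> x + y \<in> K" unfolding subfield_def by blast
lemma subfield_diff: "subfield K \<Longrightarrow> x \<in> K \<Longrightarrow> y \<in> K \<Longrightarrow> x - y \<in> K" unfolding subfield_def by blast
lemma subfield_mult: "subfield K \<Longrightarrow> x \<in> K \<Longrightarrow> y \<in> K \<Longrightarrow> x * y \<in> K" unfolding subfield_def by blast
lemma subfield_inverse: "subfield K \<Longrightarrow> x \<in> K \<Longrightarrow> inverse x \<in> K" unfolding subfield_def by blast
lemma subfield_uminus: "subfield K \<Longrightarrow> x \<in> K \<Longrightarrow> - x \<in> K"
  using subfield_diff[of K 0 x] subfield_0[of K] by simp
lemma subfield_divide: "subfield K \<Longrightarrow> x \<in> K \<Longrightarrow> y \<in> K \<Longrightarrow> x / y \<in> K"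
  by (simp add: divide_inverse subfield_mult subfield_inverse)
lemma subfield_power: "subfield K \<Longrightarrow> x \<in> K \<Longrightarrow> x ^ n \<in> K"
  by (induction n) (auto simp: subfield_1 subfield_mult)
lemma subfield_of_nat: "subfield K \<Longrightarrow> of_nat n \<in> K"
  by (induction n) (auto simp: subfield_0 subfield_1 subfield_add)
lemma subfield_sum: "subfield K \<Longrightarrow> (\<forall>i\<in>I. f i \<in> K) \<Longrightarrow> sum f I \<in> K"
  by (induction I rule: infinite_finite_induct) (auto simp: subfield_0 subfield_add)

locale char_p =
  fixes T :: "'a::field itself"
  assumes charpos: "CHAR('a) > 0"
begin

lemma prime_CHAR: "prime CHAR('a)"
  using prime_CHAR_semidom[OF charpos] .

lemma frobenius_add: "(x + y :: 'a) ^ CHAR('a) = x ^ CHAR('a) + y ^ CHAR('a)"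
  using freshmans_dream[OF prime_CHAR refl] .

lemma frobenius_diff: "(x - y :: 'a) ^ CHAR('a) = x ^ CHAR('a) - y ^ CHAR('a)"
  using frobenius_add[of "x - y" y] by simp

lemma Fp_subfield: "subfield (Fp :: 'a set)"
  unfolding subfield_def Fp_def
proof (intro conjI ballI)
  show "(0::'a) \<in> {x ^ CHAR('a) |x. True}" using charpos by (intro CollectI exI[of _ 0]) simp
  show "(1::'a) \<in> {x ^ CHAR('a) |x. True}" by (intro CollectI exI[of _ 1]) simp
  fix x y :: 'a assume x: "x \<in> {x ^ CHAR('a) |x. True}" and y: "y \<in> {x ^ CHAR('a) |x. True}"
  from x y obtain a b where ab: "x = a ^ CHAR('a)" "y = b ^ CHAR('a)" by blast
  show "x + y \<in> {x ^ CHAR('a) |x. True}" using ab frobenius_add[of a b] by (intro CollectI exI[of _ "a + b"]) simp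
  show "x - y \<in> {x ^ CHAR('a) |x. True}" using ab frobenius_diff[of a b] by (intro CollectI exI[of _ "a - b"]) simp
  show "x * y \<in> {x ^ CHAR('a) |x. True}" using ab by (intro CollectI exI[of _ "a * b"]) (simp add: power_mult_distrib)
next
  fix x :: 'a assume x: "x \<in> {x ^ CHAR('a) |x. True}"
  then obtain a where "x = a ^ CHAR('a)" by blast
  then show "inverse x \<in> {x ^ CHAR('a) |x. True}" by (intro CollectI exI[of _ "inverse a"]) (simp add: power_inverse)
qed

lemma pow_in_Fp: "(x::'a) ^ CHAR('a) \<in> Fp"
  unfolding Fp_def by blast

lemma Fp_adj_subfield: "subfield (Fp_adj C)"
  unfolding Fp_adj_def by (rule gen_field_subfield)

lemma Fp_subset_Fp_adj: "Fp \<subseteq> Fp_adj C"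
  unfolding Fp_adj_def using gen_field_sup by blast

lemma subset_Fp_adj: "C \<subseteq> Fp_adj C"
  unfolding Fp_adj_def using gen_field_sup by blast

lemma Fp_adj_least: "subfield K \<Longrightarrow> Fp \<subseteq> K \<Longrightarrow> C \<subseteq> K \<Longrightarrow> Fp_adj C \<subseteq> K"
  unfolding Fp_adj_def by (intro gen_field_least) auto

lemma Fp_adj_mono: "C \<subseteq> D \<Longrightarrow> Fp_adj C \<subseteq> Fp_adj D"
  by (meson subset_Fp_adj Fp_adj_least Fp_adj_subfield Fp_subset_Fp_adj order_trans)

lemma Fp_adj_subset: "C \<subseteq> Fp_adj D \<Longrightarrow> Fp_adj C \<subseteq> Fp_adj D"
  by (simp add: Fp_adj_least Fp_adj_subfield Fp_subset_Fp_adj)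

end

section \<open>Polynomials over a subfield\<close>

definition polys_over :: "'a::field set \<Rightarrow> 'a poly set" where
  "polys_over K = {q. \<forall>i. coeff q i \<in> K}"

lemma polys_over_0: "subfield K \<Longrightarrow> 0 \<in> polys_over K" unfolding polys_over_def by (simp add: subfield_0)
lemma polys_over_const: "subfield K \<Longrightarrow> a \<in> K \<Longrightarrow> [:a:] \<in> polys_over K"
  unfolding polys_over_def by (auto simp: coeff_pCons subfield_0 split: nat.split)
lemma polys_over_pCons: "subfield K \<Longrightarrow> a \<in> K \<Longrightarrow> q \<in> polys_over K \<Longrightarrow> pCons a q \<in> polys_over K"
  unfolding polys_over_def by (auto simp: coeff_pCons split: nat.split)
lemma polys_over_add: "subfield K \<Longrightarrow> q \<in> polys_over K \<Longrightarrow> r \<in> polys_over K \<Longrightarrow> q + r \<in> polys_over K"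
  unfolding polys_over_def by (auto simp: subfield_add)
lemma polys_over_diff: "subfield K \<Longrightarrow> q \<in> polys_over K \<Longrightarrow> r \<in> polys_over K \<Longrightarrow> q - r \<in> polys_over K"
  unfolding polys_over_def by (auto simp: subfield_diff)
lemma polys_over_mult: "subfield K \<Longrightarrow> q \<in> polys_over K \<Longrightarrow> r \<in> polys_over K \<Longrightarrow> q * r \<in> polys_over K"
  unfolding polys_over_def by (auto simp: coeff_mult intro!: subfield_sum subfield_mult)
lemma polys_over_smult: "subfield K \<Longrightarrow> a \<in> K \<Longrightarrow> q \<in> polys_over K \<Longrightarrow> smult a q \<in> polys_over K"
  unfolding polys_over_def by (auto simp: subfield_mult)
lemma polys_over_monom: "subfield K \<Longrightarrow> a \<in> K \<Longrightarrow> monom a n \<in> polys_over K"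
  unfolding polys_over_def by (auto simp: coeff_monom subfield_0)
lemma polys_over_power: "subfield K \<Longrightarrow> q \<in> polys_over K \<Longrightarrow> q ^ n \<in> polys_over K"
proof (induction n)
  case 0 then show ?case using polys_over_const[of K 1] by (simp add: subfield_1 one_pCons)
next
  case (Suc n) then show ?case by (simp add: polys_over_mult)
qed
lemma polys_over_pderiv: "subfield K \<Longrightarrow> q \<in> polys_over K \<Longrightarrow> pderiv q \<in> polys_over K"
  unfolding polys_over_def using subfield_of_nat[of K "Suc _"] by (auto simp: coeff_pderiv intro!: subfield_mult)
lemma polys_over_X: "subfield K \<Longrightarrow> [:0, 1:] \<in> polys_over K"
  by (intro polys_over_pCons polys_over_const) (auto simp: subfield_0 subfield_1)

lemma poly_in_subfield: "subfield K \<Longrightarrow> q \<in> polys_over K \<Longrightarrow> y \<in> K \<Longrightarrow> poly q y \<in> K"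
  unfolding poly_altdef polys_over_def by (auto intro!: subfield_sum subfield_mult subfield_power)

lemma degree_pderiv_le: "degree (pderiv q) \<le> degree q - 1"
  by (rule degree_le) (auto simp: coeff_pderiv coeff_eq_0)

lemma polys_over_div_monic:
  assumes K: "subfield K" and q0: "q0 \<in> polys_over K" "lead_coeff q0 = 1"
  shows "f \<in> polys_over K \<Longrightarrow> \<exists>s r. s \<in> polys_over K \<and> r \<in> polys_over K \<and> f = q0 * s + r \<and> (r = 0 \<or> degree r < degree q0)"
proof (induction "degree f" arbitrary: f rule: less_induct)
  case less
  show ?case
  proof (cases "f = 0 \<or> degree f < degree q0")
    case True
    then show ?thesis using less.prems polys_over_0[OF K] by (intro exI[of _ 0] exI[of _ f]) auto
  next
    case False
    then have f0: "f \<noteq> 0" and dg: "degree q0 \<le> degree f" by auto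
    define d where "d = degree f - degree q0"
    define c where "c = lead_coeff f"
    have c0: "c \<noteq> 0" using f0 unfolding c_def by simp
    have cK: "c \<in> K" using less.prems unfolding c_def polys_over_def by simp
    have q00: "q0 \<noteq> 0" using q0 by auto
    define g where "g = monom c d * q0"
    have dg_g: "degree g = degree f"
      unfolding g_def using c0 q00 dg by (simp add: degree_mult_eq degree_monom_eq d_def)
    have cg: "coeff g (degree f) = c"
      using coeff_mult_degree_sum[of "monom c d" q0] q0 c0 dg_g unfolding g_def
      by (simp add: degree_mult_eq degree_monom_eq q00)
    define f' where "f' = f - g"
    have f'K: "f' \<in> polys_over K" unfolding f'_def g_def using less.prems q0 K cK
      by (intro polys_over_diff polys_over_mult polys_over_monom) auto
    have "degree f' \<le> degree f" unfolding f'_def using dg_g by (intro degree_diff_le) auto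
    moreover have "coeff f' (degree f) = 0" unfolding f'_def using cg c_def by simp
    ultimately have f'd: "f' = 0 \<or> degree f' < degree f"
      by (metis le_neq_implies_less leading_coeff_0_iff)
    show ?thesis
    proof (cases "f' = 0")
      case True
      then have "f = q0 * monom c d + 0" unfolding f'_def g_def by (simp add: mult.commute)
      then show ?thesis using K cK polys_over_0[OF K] polys_over_monom[OF K cK] by blast
    next
      case False
      with f'd have "degree f' < degree f" by simp
      from less.hyps[OF this f'K] obtain s r where sr: "s \<in> polys_over K" "r \<in> polys_over K" "f' = q0 * s + r"
        "r = 0 \<or> degree r < degree q0" by blast
      have "f = q0 * (s + monom c d) + r" using sr(3) unfolding f'_def g_def
        by (simp add: algebra_simps)
      then show ?thesis using sr polys_over_add[OF K sr(1) polys_over_monom[OF K cK]] by blast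
    qed
  qed
qed

lemma polys_over_minimal_poly:
  assumes K: "subfield K" and q: "q \<in> polys_over K" "q \<noteq> 0" "poly q x = 0"
  obtains q1 where "q1 \<in> polys_over K" "lead_coeff q1 = 1" "poly q1 x = 0" "degree q1 \<le> degree q"
    "\<And>r. r \<in> polys_over K \<Longrightarrow> r \<noteq> 0 \<Longrightarrow> poly r x = 0 \<Longrightarrow> degree q1 \<le> degree r"
    "\<And>m. m \<in> polys_over K \<Longrightarrow> poly m x = 0 \<Longrightarrow> \<exists>s\<in>polys_over K. m = q1 * s"
proof -
  define P where "P r \<longleftrightarrow> r \<in> polys_over K \<and> r \<noteq> 0 \<and> poly r x = 0" for r
  have "P q" unfolding P_def using q by simp
  from ex_has_least_nat[of P q degree, OF this] obtain q0 where q0: "P q0"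
    and q0min: "\<And>r. P r \<Longrightarrow> degree q0 \<le> degree r" by blast
  define q1 where "q1 = smult (inverse (lead_coeff q0)) q0"
  have lc0: "lead_coeff q0 \<noteq> 0" using q0 unfolding P_def by simp
  have q1K: "q1 \<in> polys_over K" unfolding q1_def using q0 K
    by (intro polys_over_smult) (auto simp: P_def polys_over_def subfield_inverse)
  have q1lc: "lead_coeff q1 = 1" unfolding q1_def using lc0 by (simp add: lead_coeff_smult)
  have q1x: "poly q1 x = 0" unfolding q1_def using q0 by (simp add: P_def)
  have min: "degree q1 \<le> degree r" if "r \<in> polys_over K" "r \<noteq> 0" "poly r x = 0" for r
    using q0min[of r] that lc0 unfolding P_def q1_def by simp
  have "\<exists>s\<in>polys_over K. m = q1 * s" if mK: "m \<in> polys_over K" and mx: "poly m x = 0" for m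
  proof -
    from polys_over_div_monic[OF K q1K q1lc mK] obtain s r where sr: "s \<in> polys_over K"
      "r \<in> polys_over K" "m = q1 * s + r" "r = 0 \<or> degree r < degree q1" by blast
    have "poly r x = 0" using sr(3) mx q1x by simp
    then have "r = 0" using min[OF sr(2)] sr(4) by force
    then show ?thesis using sr by auto
  qed
  with that q1K q1lc q1x min q show ?thesis by blast
qed

lemma polys_over_monic_root_degree_ge_2:
  assumes K: "subfield K" and q: "q \<in> polys_over K" "lead_coeff q = 1" "poly q x = 0" and x: "x \<notin> K"
  shows "2 \<le> degree q"
proof (rule ccontr)
  assume "\<not> 2 \<le> degree q"
  then consider "degree q = 0" | "degree q = 1" by linarith
  then show False
  proof cases
    case 1
    then show False using q by (simp add: poly_altdef)
  next
    case 2
    then have "0 = coeff q 0 + x" using q by (simp add: poly_altdef)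
    then have "x = - coeff q 0" by (simp add: eq_neg_iff_add_eq_0 add.commute)
    then show False using x q(1) K by (auto simp: polys_over_def subfield_uminus)
  qed
qed

definition pth_power_poly :: "'a::field \<Rightarrow> 'a poly" where "pth_power_poly x = monom 1 CHAR('a) - [:x ^ CHAR('a):]"

context char_p begin

lemma coeff_pth_power_poly: "coeff (pth_power_poly (x::'a)) i = (if i = CHAR('a) then 1 else if i = 0 then - (x ^ CHAR('a)) else 0)"
  unfolding pth_power_poly_def using charpos by (auto simp: coeff_monom coeff_pCons split: nat.split)

lemma coeff_pth_power_poly_in_Fp: "coeff (pth_power_poly (x::'a)) i \<in> Fp"
  unfolding coeff_pth_power_poly using Fp_subfield pow_in_Fp[of x]
  by (auto simp: subfield_0 subfield_1 subfield_uminus)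

lemma pth_power_poly_polys_over: "subfield (K::'a set) \<Longrightarrow> Fp \<subseteq> K \<Longrightarrow> pth_power_poly x \<in> polys_over K"
  unfolding polys_over_def using coeff_pth_power_poly_in_Fp by blast

lemma poly_pth_power_poly: "poly (pth_power_poly (x::'a)) x = 0"
  unfolding pth_power_poly_def by (simp add: poly_monom)

lemma degree_pth_power_poly: "degree (pth_power_poly (x::'a)) = CHAR('a)"
proof (rule antisym)
  show "degree (pth_power_poly x) \<le> CHAR('a)" by (rule degree_le) (auto simp: coeff_pth_power_poly)
  show "CHAR('a) \<le> degree (pth_power_poly x)" by (rule le_degree) (simp add: coeff_pth_power_poly)
qed

lemma lead_coeff_pth_power_poly: "lead_coeff (pth_power_poly (x::'a)) = 1"
  by (simp add: degree_pth_power_poly coeff_pth_power_poly)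

lemma pth_power_poly_neq_0: "pth_power_poly (x::'a) \<noteq> 0"
  using lead_coeff_pth_power_poly[of x] by auto

lemma pderiv_pth_power_poly: "pderiv (pth_power_poly (x::'a)) = 0"
  unfolding pth_power_poly_def by (simp add: pderiv_diff pderiv_monom)

lemma of_nat_neq_0_below_CHAR: "0 < n \<Longrightarrow> n < CHAR('a) \<Longrightarrow> of_nat n \<noteq> (0::'a)"
  by (simp add: of_nat_eq_0_iff_char_dvd nat_dvd_not_less)

lemma polys_over_root_low_degree:
  fixes K :: "'a set" and x :: 'a
  assumes K: "subfield K" "Fp \<subseteq> K" and x: "x \<notin> K"
    and q: "q \<in> polys_over K" "degree q < CHAR('a)" "poly q x = 0"
  shows "q = 0"
proof (rule ccontr)
  assume "q \<noteq> 0"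
  with polys_over_minimal_poly[OF K(1) q(1) _ q(3)] obtain q1 where
    q1K: "q1 \<in> polys_over K" and q1lc: "lead_coeff q1 = 1" and q1x: "poly q1 x = 0"
    and dq: "degree q1 \<le> degree q"
    and min: "\<And>r. r \<in> polys_over K \<Longrightarrow> r \<noteq> 0 \<Longrightarrow> poly r x = 0 \<Longrightarrow> degree q1 \<le> degree r"
    and divx: "\<And>m. m \<in> polys_over K \<Longrightarrow> poly m x = 0 \<Longrightarrow> \<exists>s\<in>polys_over K. m = q1 * s"
    by blast
  define d where "d = degree q1"
  have q1nz: "q1 \<noteq> 0" using q1lc by auto
  have dp: "d < CHAR('a)" using dq q(2) unfolding d_def by simp
  have d2: "2 \<le> d" unfolding d_def by (rule polys_over_monic_root_degree_ge_2[OF K(1) q1K q1lc q1x x])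
  define q1' where "q1' = pderiv q1"
  have q1'K: "q1' \<in> polys_over K" unfolding q1'_def by (rule polys_over_pderiv[OF K(1) q1K])
  have "coeff q1' (d - 1) = of_nat d" unfolding q1'_def coeff_pderiv using d2 q1lc
    by (simp add: d_def)
  then have "q1' \<noteq> 0" using of_nat_neq_0_below_CHAR[of d] d2 dp by auto
  moreover have "degree q1' < d" unfolding q1'_def d_def using degree_pderiv_le[of q1] d2 d_def by simp
  ultimately have q1'x: "poly q1' x \<noteq> 0" using min[OF q1'K] unfolding d_def by fastforce
  \<comment> \<open>As \<open>q1'(x) \<noteq> 0\<close>, differentiating \<open>X^p - x^p = q1^(j+1) m\<close> gives \<open>m(x) = 0\<close>:
     so every power of \<open>q1\<close> divides \<open>X^p - x^p\<close>.\<close>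
  have "\<exists>m\<in>polys_over K. pth_power_poly x = q1 ^ Suc j * m" for j
  proof (induction j)
    case 0
    show ?case using divx[OF pth_power_poly_polys_over[OF K] poly_pth_power_poly] by simp
  next
    case (Suc j)
    then obtain m where mK: "m \<in> polys_over K" and fac: "pth_power_poly x = q1 ^ Suc j * m" by blast
    have "m \<noteq> 0" using fac pth_power_poly_neq_0 by auto
    then have "Suc j * d \<le> CHAR('a)"
      using fac q1nz degree_pth_power_poly[of x] by (simp add: degree_mult_eq degree_power_eq d_def)
    moreover have "Suc j * 2 \<le> Suc j * d" using d2 by (rule mult_le_mono2)
    ultimately have "Suc j * 2 \<le> CHAR('a)" by (meson le_trans)
    then have jp: "Suc j < CHAR('a)" by simp
    have "0 = pderiv (q1 ^ Suc j * m)" using pderiv_pth_power_poly[of x] unfolding fac by simp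
    also have "\<dots> = q1 ^ j * (q1 * pderiv m + smult (of_nat (Suc j)) (m * q1'))"
      unfolding pderiv_mult pderiv_power_Suc q1'_def by (simp add: algebra_simps)
    finally have "q1 * pderiv m + smult (of_nat (Suc j)) (m * q1') = 0"
      using q1nz by simp
    then have "poly (q1 * pderiv m + smult (of_nat (Suc j)) (m * q1')) x = 0" by simp
    then have "of_nat (Suc j) * (poly m x * poly q1' x) = 0" using q1x by simp
    then have "poly m x = 0" using of_nat_neq_0_below_CHAR[of "Suc j"] jp q1'x by simp
    from divx[OF mK this] obtain s where "s \<in> polys_over K" "m = q1 * s" by blast
    then show ?case using fac by (metis mult.assoc power_Suc2)
  qed
  then obtain m where fac: "pth_power_poly x = q1 ^ Suc (CHAR('a)) * m" by blast
  then have "m \<noteq> 0" using pth_power_poly_neq_0 by auto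
  then have "Suc (CHAR('a)) * d \<le> CHAR('a)"
    using fac q1nz degree_pth_power_poly[of x] by (simp add: degree_mult_eq degree_power_eq d_def)
  moreover have "CHAR('a) \<le> d * CHAR('a)" using d2 by simp
  ultimately show False using d2 by (simp add: algebra_simps)
qed

end

definition adjoin :: "'a::field set \<Rightarrow> 'a \<Rightarrow> 'a set" where
  "adjoin K x = {poly q x | q. q \<in> polys_over K}"

definition derivation_on :: "'a::field set \<Rightarrow> ('a \<Rightarrow> 'a) \<Rightarrow> bool" where
  "derivation_on K D \<longleftrightarrow> (\<forall>x\<in>K. \<forall>y\<in>K. D (x + y) = D x + D y \<and> D (x * y) = x * D y + y * D x) \<and> (\<forall>x\<in>Fp. D x = 0)"

(* For x \<notin> K with x^p \<in> K, the extension of D to K(x) with D x = v maps q(x) to q^D(x) + v q'(x). *)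
definition deriv_poly :: "('a::field \<Rightarrow> 'a) \<Rightarrow> 'a \<Rightarrow> 'a \<Rightarrow> 'a poly \<Rightarrow> 'a" where
  "deriv_poly D v x q = poly (map_poly D q) x + v * poly (pderiv q) x"

definition extend_derivation :: "'a::field set \<Rightarrow> ('a \<Rightarrow> 'a) \<Rightarrow> 'a \<Rightarrow> 'a \<Rightarrow> 'a \<Rightarrow> 'a" where
  "extend_derivation K D v x y = deriv_poly D v x (SOME q. q \<in> polys_over K \<and> poly q x = y)"

context char_p begin

lemma poly_frobenius: "poly q (x::'a) ^ CHAR('a) = poly (map_poly (\<lambda>c. c ^ CHAR('a)) q) (x ^ CHAR('a))"
proof (induction q rule: pCons_induct)
  case 0 then show ?case using charpos by simp
next
  case (pCons a q)
  have f0: "(\<lambda>c::'a. c ^ CHAR('a)) 0 = 0" using charpos by simp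
  show ?case using pCons.IH
    by (simp add: map_poly_pCons[of "\<lambda>c::'a. c ^ CHAR('a)", OF f0] frobenius_add power_mult_distrib)
qed

lemma adjoin_subfield:
  fixes K :: "'a set"
  assumes K: "subfield K" "Fp \<subseteq> K"
  shows "subfield (adjoin K x)"
  unfolding subfield_def
proof (intro conjI ballI)
  show "0 \<in> adjoin K x" unfolding adjoin_def using polys_over_0[OF K(1)] by force
  show "1 \<in> adjoin K x" unfolding adjoin_def using polys_over_const[OF K(1) subfield_1[OF K(1)]] by force
  fix y z assume y: "y \<in> adjoin K x" and z: "z \<in> adjoin K x"
  then obtain q r where q: "q \<in> polys_over K" "y = poly q x" and r: "r \<in> polys_over K" "z = poly r x"
    unfolding adjoin_def by blast
  show "y + z \<in> adjoin K x" unfolding adjoin_def using q r polys_over_add[OF K(1) q(1) r(1)]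
    by (intro CollectI exI[of _ "q + r"]) simp
  show "y - z \<in> adjoin K x" unfolding adjoin_def using q r polys_over_diff[OF K(1) q(1) r(1)]
    by (intro CollectI exI[of _ "q - r"]) simp
  show "y * z \<in> adjoin K x" unfolding adjoin_def using q r polys_over_mult[OF K(1) q(1) r(1)]
    by (intro CollectI exI[of _ "q * r"]) simp
next
  fix y assume y: "y \<in> adjoin K x"
  then obtain q where q: "q \<in> polys_over K" "y = poly q x" unfolding adjoin_def by blast
  define N where "N = y ^ CHAR('a)"
  have mK: "map_poly (\<lambda>c. c ^ CHAR('a)) q \<in> polys_over K"
    using q(1) charpos unfolding polys_over_def by (simp add: coeff_map_poly subfield_power[OF K(1)])
  have NK: "N \<in> K" unfolding N_def q(2) poly_frobenius using poly_in_subfield[OF K(1) mK] pow_in_Fp K(2) by blast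
  have inv: "inverse y = poly (smult (inverse N) (q ^ (CHAR('a) - 1))) x"
  proof (cases "y = 0")
    case True then show ?thesis using charpos unfolding N_def by simp
  next
    case False
    have pe: "CHAR('a) = Suc (CHAR('a) - 1)" using charpos by simp
    have NY: "N = y * y ^ (CHAR('a) - 1)" unfolding N_def by (subst pe) (simp only: power_Suc)
    have Y: "y ^ (CHAR('a) - 1) \<noteq> 0" using False by simp
    have "poly (smult (inverse N) (q ^ (CHAR('a) - 1))) x = inverse N * y ^ (CHAR('a) - 1)"
      using q(2) by (simp add: poly_power)
    also have "\<dots> = inverse y" unfolding NY using Y by (simp add: inverse_mult_distrib)
    finally show ?thesis by simp
  qed
  have "smult (inverse N) (q ^ (CHAR('a) - 1)) \<in> polys_over K"
    by (intro polys_over_smult polys_over_power q(1) K(1) subfield_inverse NK)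
  then show "inverse y \<in> adjoin K x" unfolding adjoin_def inv by blast
qed

lemma subset_adjoin: "subfield K \<Longrightarrow> K \<subseteq> adjoin K x"
proof
  fix k assume K: "subfield K" and k: "k \<in> K"
  have "k = poly [:k:] x" by simp
  then show "k \<in> adjoin K x" unfolding adjoin_def using polys_over_const[OF K k] by blast
qed

lemma in_adjoin: "subfield K \<Longrightarrow> x \<in> adjoin K x"
proof -
  assume K: "subfield K"
  have "x = poly [:0, 1:] x" by simp
  then show "x \<in> adjoin K x" unfolding adjoin_def using polys_over_X[OF K] by blast
qed

lemma adjoin_least: "subfield L \<Longrightarrow> K \<subseteq> L \<Longrightarrow> x \<in> L \<Longrightarrow> adjoin K x \<subseteq> L"
proof
  fix y assume L: "subfield L" and KL: "K \<subseteq> L" and x: "x \<in> L" and y: "y \<in> adjoin K x"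
  then obtain q where q: "q \<in> polys_over K" "y = poly q x" unfolding adjoin_def by blast
  have "q \<in> polys_over L" using q KL unfolding polys_over_def by blast
  then show "y \<in> L" using poly_in_subfield[OF L _ x] q by simp
qed

lemma Fp_adj_insert: "Fp_adj (insert (x::'a) R) = adjoin (Fp_adj R) x"
proof
  show "Fp_adj (insert x R) \<subseteq> adjoin (Fp_adj R) x"
  proof (rule Fp_adj_least)
    show "subfield (adjoin (Fp_adj R) x)" by (rule adjoin_subfield[OF Fp_adj_subfield Fp_subset_Fp_adj])
    show "Fp \<subseteq> adjoin (Fp_adj R) x" using Fp_subset_Fp_adj[of R] subset_adjoin[OF Fp_adj_subfield[of R], of x] by (rule order_trans)
    have "R \<subseteq> adjoin (Fp_adj R) x" using subset_Fp_adj[of R] subset_adjoin[OF Fp_adj_subfield[of R], of x] by (rule order_trans)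
    then show "insert x R \<subseteq> adjoin (Fp_adj R) x" using in_adjoin[OF Fp_adj_subfield[of R], of x] by simp
  qed
  show "adjoin (Fp_adj R) x \<subseteq> Fp_adj (insert x R)"
  proof (rule adjoin_least[OF Fp_adj_subfield])
    show "Fp_adj R \<subseteq> Fp_adj (insert x R)" by (rule Fp_adj_mono) blast
    show "x \<in> Fp_adj (insert x R)" using subset_Fp_adj[of "insert x R"] by blast
  qed
qed

section \<open>Derivations\<close>

lemma derivation_on_0: "derivation_on K D \<Longrightarrow> D (0::'a) = 0"
  unfolding derivation_on_def using subfield_0[OF Fp_subfield] by blast
lemma derivation_on_1: "derivation_on K D \<Longrightarrow> D (1::'a) = 0"
  unfolding derivation_on_def using subfield_1[OF Fp_subfield] by blast
lemma derivation_on_Fp: "derivation_on K D \<Longrightarrow> (y::'a) \<in> Fp \<Longrightarrow> D y = 0"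
  unfolding derivation_on_def by blast
lemma derivation_on_add: "derivation_on K D \<Longrightarrow> (y::'a) \<in> K \<Longrightarrow> z \<in> K \<Longrightarrow> D (y + z) = D y + D z"
  unfolding derivation_on_def by blast
lemma derivation_on_mult: "derivation_on K D \<Longrightarrow> (y::'a) \<in> K \<Longrightarrow> z \<in> K \<Longrightarrow> D (y * z) = y * D z + z * D y"
  unfolding derivation_on_def by blast
lemma derivation_on_diff: "subfield K \<Longrightarrow> derivation_on K D \<Longrightarrow> (y::'a) \<in> K \<Longrightarrow> z \<in> K \<Longrightarrow> D (y - z) = D y - D z"
  using derivation_on_add[of K D "y - z" z] subfield_diff[of K y z] by simp
lemma derivation_on_sum: "subfield K \<Longrightarrow> derivation_on K D \<Longrightarrow> (\<forall>i\<in>I. f i \<in> K) \<Longrightarrow> D (sum f I) = (\<Sum>i\<in>I. D (f i :: 'a))"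
proof (induction I rule: infinite_finite_induct)
  case (infinite A) then show ?case using derivation_on_0 by simp
next
  case empty then show ?case using derivation_on_0 by simp
next
  case (insert i F)
  then show ?case using derivation_on_add[of K D "f i" "sum f F"] subfield_sum[of K F f] by simp
qed

lemma coeff_map_derivation: "derivation_on K D \<Longrightarrow> coeff (map_poly D q) n = D (coeff q n :: 'a)"
  using coeff_map_poly derivation_on_0 by metis

lemma map_derivation_add: "derivation_on K D \<Longrightarrow> q \<in> polys_over K \<Longrightarrow> r \<in> polys_over K \<Longrightarrow>
    map_poly D (q + r) = map_poly D q + map_poly D (r :: 'a poly)"
  by (rule poly_eqI) (simp add: coeff_map_derivation derivation_on_add polys_over_def)

lemma map_derivation_diff: "subfield K \<Longrightarrow> derivation_on K D \<Longrightarrow> q \<in> polys_over K \<Longrightarrow> r \<in> polys_over K \<Longrightarrow>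
    map_poly D (q - r) = map_poly D q - map_poly D (r :: 'a poly)"
  by (rule poly_eqI) (simp add: coeff_map_derivation derivation_on_diff polys_over_def)

lemma map_derivation_mult:
  assumes K: "subfield K" and D: "derivation_on K D" and q: "q \<in> polys_over K" and r: "r \<in> polys_over K"
  shows "map_poly D (q * r) = map_poly D q * r + q * map_poly D (r :: 'a poly)"
proof (rule poly_eqI)
  fix n
  have qi: "coeff q i \<in> K" and ri: "coeff r i \<in> K" for i using q r unfolding polys_over_def by auto
  have "coeff (map_poly D (q * r)) n = D (\<Sum>i\<le>n. coeff q i * coeff r (n - i))"
    by (simp add: coeff_map_derivation[OF D] coeff_mult)
  also have "\<dots> = (\<Sum>i\<le>n. D (coeff q i * coeff r (n - i)))"
    using qi ri by (intro derivation_on_sum[OF K D]) (auto intro: subfield_mult[OF K])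
  also have "\<dots> = (\<Sum>i\<le>n. D (coeff q i) * coeff r (n - i)) + (\<Sum>i\<le>n. coeff q i * D (coeff r (n - i)))"
  proof -
    have "(\<Sum>i\<le>n. D (coeff q i * coeff r (n - i))) = (\<Sum>i\<le>n. D (coeff q i) * coeff r (n - i) + coeff q i * D (coeff r (n - i)))"
      by (rule sum.cong) (simp_all add: derivation_on_mult[OF D qi ri])
    also have "\<dots> = (\<Sum>i\<le>n. D (coeff q i) * coeff r (n - i)) + (\<Sum>i\<le>n. coeff q i * D (coeff r (n - i)))"
      by (rule sum.distrib)
    finally show ?thesis .
  qed
  also have "\<dots> = coeff (map_poly D q * r + q * map_poly D r) n"
    by (simp add: coeff_mult coeff_map_derivation[OF D])
  finally show "coeff (map_poly D (q * r)) n = coeff (map_poly D q * r + q * map_poly D r) n" .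
qed

lemma map_derivation_const: "derivation_on K D \<Longrightarrow> map_poly D [:k::'a:] = [:D k:]"
  by (rule poly_eqI) (simp add: coeff_map_derivation coeff_pCons derivation_on_0 split: nat.split)

lemma map_derivation_X: "derivation_on K D \<Longrightarrow> map_poly D [:0::'a, 1:] = 0"
  by (rule poly_eqI) (simp add: coeff_map_derivation coeff_pCons derivation_on_0 derivation_on_1 split: nat.split)

lemma map_derivation_pth_power_poly: "derivation_on K D \<Longrightarrow> map_poly D (pth_power_poly (x::'a)) = 0"
  by (rule poly_eqI) (simp add: coeff_map_derivation derivation_on_Fp[OF _ coeff_pth_power_poly_in_Fp])

lemma deriv_poly_add: "derivation_on K D \<Longrightarrow> q \<in> polys_over K \<Longrightarrow> r \<in> polys_over K \<Longrightarrow> deriv_poly D v x (q + r) = deriv_poly D v x q + deriv_poly D v (x::'a) r"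
  unfolding deriv_poly_def by (simp add: map_derivation_add pderiv_add algebra_simps)

lemma deriv_poly_diff: "subfield K \<Longrightarrow> derivation_on K D \<Longrightarrow> q \<in> polys_over K \<Longrightarrow> r \<in> polys_over K \<Longrightarrow> deriv_poly D v x (q - r) = deriv_poly D v x q - deriv_poly D v (x::'a) r"
  unfolding deriv_poly_def by (simp add: map_derivation_diff pderiv_diff algebra_simps)

lemma deriv_poly_mult: "subfield K \<Longrightarrow> derivation_on K D \<Longrightarrow> q \<in> polys_over K \<Longrightarrow> r \<in> polys_over K \<Longrightarrow>
   deriv_poly D v x (q * r) = poly q x * deriv_poly D v x r + poly r x * deriv_poly D v (x::'a) q"
  unfolding deriv_poly_def by (simp add: map_derivation_mult pderiv_mult algebra_simps)

lemma deriv_poly_root: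
  fixes K :: "'a set"
  assumes K: "subfield K" "Fp \<subseteq> K" and D: "derivation_on K D" and x: "x \<notin> K"
    and q: "q \<in> polys_over K" "poly q x = 0"
  shows "deriv_poly D v x q = 0"
proof -
  from polys_over_div_monic[OF K(1) pth_power_poly_polys_over[OF K] lead_coeff_pth_power_poly q(1)] obtain s r where sr: "s \<in> polys_over K" "r \<in> polys_over K"
    "q = pth_power_poly x * s + r" "r = 0 \<or> degree r < degree (pth_power_poly x)" by blast
  have "poly r x = 0" using sr(3) q(2) poly_pth_power_poly[of x] by simp
  then have "r = 0" using polys_over_root_low_degree[OF K x sr(2)] sr(4) degree_pth_power_poly[of x] by auto
  then have qs: "q = pth_power_poly x * s" using sr by simp
  show ?thesis unfolding qs deriv_poly_def
    using map_derivation_mult[OF K(1) D pth_power_poly_polys_over[OF K] sr(1)] map_derivation_pth_power_poly[OF D]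
    by (simp add: pderiv_mult pderiv_pth_power_poly poly_pth_power_poly)
qed

lemma deriv_poly_cong:
  fixes K :: "'a set"
  assumes K: "subfield K" "Fp \<subseteq> K" and D: "derivation_on K D" and x: "x \<notin> K"
    and q: "q \<in> polys_over K" "r \<in> polys_over K" "poly q x = poly r x"
  shows "deriv_poly D v x q = deriv_poly D v x r"
  using deriv_poly_root[OF K D x polys_over_diff[OF K(1) q(1) q(2)], of v] q deriv_poly_diff[OF K(1) D q(1) q(2)] by simp

lemma extend_derivation_poly:
  fixes K :: "'a set"
  assumes K: "subfield K" "Fp \<subseteq> K" and D: "derivation_on K D" and x: "x \<notin> K" and q: "q \<in> polys_over K"
  shows "extend_derivation K D v x (poly q x) = deriv_poly D v x q"
proof -
  have "\<exists>r. r \<in> polys_over K \<and> poly r x = poly q x" using q by blast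
  then have "(SOME r. r \<in> polys_over K \<and> poly r x = poly q x) \<in> polys_over K \<and> poly (SOME r. r \<in> polys_over K \<and> poly r x = poly q x) x = poly q x"
    by (rule someI_ex)
  then show ?thesis unfolding extend_derivation_def using deriv_poly_cong[OF K D x _ q] by blast
qed

lemma extend_derivation_adjoin:
  fixes K :: "'a set" and D :: "'a \<Rightarrow> 'a" and v x :: 'a
  assumes K: "subfield K" "Fp \<subseteq> K" and D: "derivation_on K D" and x: "x \<notin> K"
  shows "derivation_on (adjoin K x) (extend_derivation K D v x) \<and> (\<forall>y\<in>K. extend_derivation K D v x y = D y) \<and> extend_derivation K D v x x = v"
proof (intro conjI ballI)
  have const: "extend_derivation K D v x y = D y" if y: "y \<in> K" for y :: 'a
  proof -
    have "extend_derivation K D v x (poly [:y:] x) = deriv_poly D v x [:y:]" using extend_derivation_poly[OF K D x polys_over_const[OF K(1) y]] .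
    then show ?thesis unfolding deriv_poly_def by (simp add: map_derivation_const[OF D])
  qed
  then show "\<And>y::'a. y \<in> K \<Longrightarrow> extend_derivation K D v x y = D y" .
  show "extend_derivation K D v x x = v"
    using extend_derivation_poly[OF K D x polys_over_X[OF K(1)], of v] unfolding deriv_poly_def by (simp add: map_derivation_X[OF D] pderiv_pCons)
  show "derivation_on (adjoin K x) (extend_derivation K D v x)"
    unfolding derivation_on_def
  proof (intro conjI ballI)
    fix y :: 'a assume "y \<in> Fp"
    then show "extend_derivation K D v x y = 0" using const K(2) derivation_on_Fp[OF D] by auto
  next
    fix y z assume y: "y \<in> adjoin K x" and z: "z \<in> adjoin K x"
    then obtain q r where q: "q \<in> polys_over K" "y = poly q x" and r: "r \<in> polys_over K" "z = poly r x"
      unfolding adjoin_def by blast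
    show "extend_derivation K D v x (y + z) = extend_derivation K D v x y + extend_derivation K D v x z"
      using extend_derivation_poly[OF K D x polys_over_add[OF K(1) q(1) r(1)], of v] extend_derivation_poly[OF K D x q(1), of v]
        extend_derivation_poly[OF K D x r(1), of v] deriv_poly_add[OF D q(1) r(1)] q r by simp
    show "extend_derivation K D v x (y * z) = y * extend_derivation K D v x z + z * extend_derivation K D v x y"
      using extend_derivation_poly[OF K D x polys_over_mult[OF K(1) q(1) r(1)], of v] extend_derivation_poly[OF K D x q(1), of v]
        extend_derivation_poly[OF K D x r(1), of v] deriv_poly_mult[OF K(1) D q(1) r(1)] q r by simp
  qed
qed

end

definition graph_on :: "'a set \<Rightarrow> ('a \<Rightarrow> 'b) \<Rightarrow> ('a \<times> 'b) set" where
  "graph_on K D = {(y, D y) | y. y \<in> K}"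

lemma graph_on_subset_iff: "graph_on K' D' \<subseteq> graph_on K D \<longleftrightarrow> K' \<subseteq> K \<and> (\<forall>y\<in>K'. D' y = D y)"
  unfolding graph_on_def by blast

lemma chain_graph_on_Union:
  assumes C: "C \<in> chains {graph_on K D | K D. P K D}"
  obtains K D where "\<Union>C = graph_on K D"
    and "\<And>y1 y2. y1 \<in> K \<Longrightarrow> y2 \<in> K \<Longrightarrow> \<exists>K' D'. P K' D' \<and> graph_on K' D' \<in> C \<and> y1 \<in> K' \<and> y2 \<in> K'"
proof -
  have rep: "\<exists>K D. G = graph_on K D \<and> P K D" if "G \<in> C" for G
    using that chainsD2[OF C] by blast
  have common: "\<exists>G\<in>C. p1 \<in> G \<and> p2 \<in> G" if "p1 \<in> \<Union>C" "p2 \<in> \<Union>C" for p1 p2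
    using that chainsD[OF C] by blast
  have func: "z1 = z2" if "(y, z1) \<in> \<Union>C" "(y, z2) \<in> \<Union>C" for y z1 z2
    using common[OF that] rep unfolding graph_on_def by blast
  define K where "K = Domain (\<Union>C)"
  define D where "D y = (THE z. (y, z) \<in> \<Union>C)" for y
  have D: "D y = z" if "(y, z) \<in> \<Union>C" for y z
    unfolding D_def by (rule the_equality) (use func that in blast)+
  have "\<Union>C = graph_on K D"
  proof
    show "\<Union>C \<subseteq> graph_on K D" unfolding graph_on_def K_def using D by force
    show "graph_on K D \<subseteq> \<Union>C" unfolding graph_on_def K_def using D by force
  qed
  moreover have "\<exists>K' D'. P K' D' \<and> graph_on K' D' \<in> C \<and> y1 \<in> K' \<and> y2 \<in> K'"
    if "y1 \<in> K" "y2 \<in> K" for y1 y2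
  proof -
    from that obtain z1 z2 where "(y1, z1) \<in> \<Union>C" "(y2, z2) \<in> \<Union>C" unfolding K_def by blast
    from common[OF this] obtain G where "G \<in> C" "(y1, z1) \<in> G" "(y2, z2) \<in> G" by blast
    with rep show ?thesis unfolding graph_on_def by blast
  qed
  ultimately show ?thesis using that by blast
qed

definition extends_derivation :: "'a::field set \<Rightarrow> ('a \<Rightarrow> 'a) \<Rightarrow> 'a set \<Rightarrow> ('a \<Rightarrow> 'a) \<Rightarrow> bool" where
  "extends_derivation K0 D0 K D \<longleftrightarrow> subfield K \<and> K0 \<subseteq> K \<and> derivation_on K D \<and> (\<forall>y\<in>K0. D y = D0 y)"

context char_p begin

lemma derivation_on_zero: "derivation_on (K::'a set) (\<lambda>_. 0)"
  unfolding derivation_on_def by simp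

lemma derivation_on_cong:
  assumes "derivation_on K D'" "subfield K" "Fp \<subseteq> K" "\<forall>y\<in>K. D y = D' (y::'a)"
  shows "derivation_on K D"
  unfolding derivation_on_def
proof (intro conjI ballI)
  fix x y assume xy: "x \<in> K" "y \<in> K"
  then have "x + y \<in> K" "x * y \<in> K" using assms(2) subfield_add subfield_mult by blast+
  with xy show "D (x + y) = D x + D y" "D (x * y) = x * D y + y * D x"
    using assms(1,4) unfolding derivation_on_def by simp_all
next
  fix x :: 'a assume x: "x \<in> Fp"
  then have "x \<in> K" using assms(3) by blast
  with x show "D x = 0" using assms(1,4) unfolding derivation_on_def by simp
qed

lemma extends_derivation_chain_Union:
  fixes K0 :: "'a set"
  assumes C: "C \<in> chains {graph_on K D | K D. extends_derivation K0 D0 K D}" "C \<noteq> {}"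
    and Fp: "Fp \<subseteq> K0"
  shows "\<Union>C \<in> {graph_on K D | K D. extends_derivation K0 D0 K D}"
proof -
  obtain K D where U: "\<Union>C = graph_on K D" and common: "\<And>y1 y2. y1 \<in> K \<Longrightarrow> y2 \<in> K \<Longrightarrow>
      \<exists>K' D'. extends_derivation K0 D0 K' D' \<and> graph_on K' D' \<in> C \<and> y1 \<in> K' \<and> y2 \<in> K'"
    using chain_graph_on_Union[OF C(1)] by blast
  have below: "K' \<subseteq> K \<and> (\<forall>y\<in>K'. D y = D' y)" if "graph_on K' D' \<in> C" for K' D'
  proof -
    have "graph_on K' D' \<subseteq> graph_on K D" using that U by (metis Union_upper)
    then show ?thesis unfolding graph_on_subset_iff by auto
  qed
  from C(2) obtain G where "G \<in> C" by blast
  with chainsD2[OF C(1)] obtain K1 D1 where K1: "graph_on K1 D1 \<in> C" "extends_derivation K0 D0 K1 D1"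
    by blast
  have K1K: "subfield K1" "K1 \<subseteq> K" "\<forall>y\<in>K1. D y = D1 y"
    using below[OF K1(1)] K1(2) unfolding extends_derivation_def by auto
  then have K0: "K0 \<subseteq> K" "\<forall>y\<in>K0. D y = D0 y"
    using K1(2) unfolding extends_derivation_def by auto
  have local: "\<exists>K'. subfield K' \<and> derivation_on K' D \<and> K' \<subseteq> K \<and> y1 \<in> K' \<and> y2 \<in> K'"
    if y: "y1 \<in> K" "y2 \<in> K" for y1 y2
  proof -
    obtain K' D' where K': "extends_derivation K0 D0 K' D'" "graph_on K' D' \<in> C" "y1 \<in> K'" "y2 \<in> K'"
      using common[OF y] by blast
    have "subfield K'" "K0 \<subseteq> K'" "derivation_on K' D'"
      using K'(1) unfolding extends_derivation_def by auto
    moreover have "K' \<subseteq> K" "\<forall>y\<in>K'. D y = D' y" using below[OF K'(2)] by auto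
    ultimately have "derivation_on K' D" using derivation_on_cong[of K' D' D] Fp by blast
    with \<open>subfield K'\<close> \<open>K' \<subseteq> K\<close> K'(3,4) show ?thesis by blast
  qed
  have "subfield K"
    unfolding subfield_def
  proof (intro conjI ballI)
    show "0 \<in> K" "1 \<in> K" using K1K subfield_0 subfield_1 by (meson subsetD)+
  next
    fix y1 y2 assume "y1 \<in> K" "y2 \<in> K"
    from local[OF this] obtain K' where "subfield K'" "K' \<subseteq> K" "y1 \<in> K'" "y2 \<in> K'" by blast
    then show "y1 + y2 \<in> K" "y1 - y2 \<in> K" "y1 * y2 \<in> K"
      using subfield_add subfield_diff subfield_mult by (meson subsetD)+
  next
    fix y assume "y \<in> K"
    from local[OF this this] obtain K' where "subfield K'" "K' \<subseteq> K" "y \<in> K'" by blast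
    then show "inverse y \<in> K" using subfield_inverse by (meson subsetD)
  qed
  moreover have "derivation_on K D"
    unfolding derivation_on_def
  proof (intro conjI ballI)
    fix y1 y2 assume "y1 \<in> K" "y2 \<in> K"
    from local[OF this] obtain K' where "derivation_on K' D" "y1 \<in> K'" "y2 \<in> K'" by blast
    then show "D (y1 + y2) = D y1 + D y2" "D (y1 * y2) = y1 * D y2 + y2 * D y1"
      using derivation_on_add derivation_on_mult by simp_all
  next
    fix y :: 'a assume y: "y \<in> Fp"
    then have "y \<in> K" using Fp K0(1) by (meson subsetD)
    from local[OF this this] obtain K' where "derivation_on K' D" by blast
    then show "D y = 0" using derivation_on_Fp y by simp
  qed
  ultimately have "extends_derivation K0 D0 K D" using K0 unfolding extends_derivation_def by simp
  then show ?thesis unfolding U by auto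
qed

(* Zorn's lemma on graphs of partial extensions; a maximal one is defined everywhere because
   every x satisfies x^p \<in> Fp, so extend_derivation_adjoin always applies. *)
lemma derivation_extends_to_UNIV:
  fixes K0 :: "'a set" and D0 :: "'a \<Rightarrow> 'a"
  assumes K0: "subfield K0" "Fp \<subseteq> K0" and D0: "derivation_on K0 D0"
  shows "\<exists>D. derivation_on UNIV D \<and> (\<forall>y\<in>K0. D y = D0 y)"
proof -
  define A where "A = {graph_on K D | K D. extends_derivation K0 D0 K D}"
  have A0: "graph_on K0 D0 \<in> A" unfolding A_def extends_derivation_def using K0 D0 by blast
  have "\<exists>M\<in>A. \<forall>X\<in>A. M \<subseteq> X \<longrightarrow> X = M"
  proof (rule Zorn_Lemma2, intro ballI)
    fix C assume C: "C \<in> chains A"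
    show "\<exists>U\<in>A. \<forall>X\<in>C. X \<subseteq> U"
    proof (cases "C = {}")
      case True
      then show ?thesis using A0 by blast
    next
      case False
      have "\<Union>C \<in> A"
        using extends_derivation_chain_Union[OF C[unfolded A_def] False K0(2)] unfolding A_def .
      then show ?thesis by blast
    qed
  qed
  then obtain M where M: "M \<in> A" and max: "\<And>X. X \<in> A \<Longrightarrow> M \<subseteq> X \<Longrightarrow> X = M" by blast
  from M have "\<exists>K D. M = graph_on K D \<and> extends_derivation K0 D0 K D" unfolding A_def by simp
  then obtain K D where MKD: "M = graph_on K D" and KD: "extends_derivation K0 D0 K D"
    by (elim exE conjE) (rule that)
  then have K: "subfield K" "Fp \<subseteq> K" "derivation_on K D"
    using K0(2) unfolding extends_derivation_def by auto
  have "K = UNIV"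
  proof (rule ccontr)
    assume "K \<noteq> UNIV"
    then obtain x where x: "x \<notin> K" by blast
    define D' where "D' = extend_derivation K D 0 x"
    have ext: "derivation_on (adjoin K x) D'" "\<forall>y\<in>K. D' y = D y"
      using extend_derivation_adjoin[OF K x, of 0] unfolding D'_def by auto
    have "K0 \<subseteq> adjoin K x" "\<forall>y\<in>K0. D' y = D0 y"
      using KD ext(2) subset_adjoin[OF K(1), of x] unfolding extends_derivation_def by auto
    then have "extends_derivation K0 D0 (adjoin K x) D'"
      using ext(1) adjoin_subfield[OF K(1,2)] unfolding extends_derivation_def by blast
    then have "graph_on (adjoin K x) D' \<in> A" unfolding A_def by blast
    moreover have "M \<subseteq> graph_on (adjoin K x) D'"
      unfolding MKD graph_on_subset_iff using ext(2) subset_adjoin[OF K(1), of x] by simp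
    ultimately have "graph_on (adjoin K x) D' \<subseteq> graph_on K D" using max MKD by blast
    then have "adjoin K x \<subseteq> K" unfolding graph_on_subset_iff by blast
    then show False using in_adjoin[OF K(1)] x by blast
  qed
  then show ?thesis using KD unfolding extends_derivation_def by blast
qed

lemma derivation_extends_with_value:
  fixes K0 :: "'a set" and D0 :: "'a \<Rightarrow> 'a"
  assumes K0: "subfield K0" "Fp \<subseteq> K0" and D0: "derivation_on K0 D0" and x: "x \<notin> K0"
  shows "\<exists>D. derivation_on UNIV D \<and> (\<forall>y\<in>K0. D y = D0 y) \<and> D x = v"
proof -
  note ext = extend_derivation_adjoin[OF K0 D0 x, of v]
  have W: "subfield (adjoin K0 x)" "Fp \<subseteq> adjoin K0 x"
    using adjoin_subfield[OF K0] subset_adjoin[OF K0(1), of x] K0(2) by auto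
  from derivation_extends_to_UNIV[OF W, of "extend_derivation K0 D0 v x"] ext obtain D where
    D: "derivation_on UNIV D" "\<forall>y\<in>adjoin K0 x. D y = extend_derivation K0 D0 v x y" by blast
  show ?thesis using D ext subset_adjoin[OF K0(1), of x] in_adjoin[OF K0(1), of x]
    by (intro exI[of _ D]) auto
qed

lemma derivation_poly_chain_rule:
  assumes D: "derivation_on (UNIV::'a set) D"
  shows "D (poly q x) = poly (map_poly D q) x + poly (pderiv q) x * D x"
proof (induction q rule: pCons_induct)
  case 0 then show ?case using derivation_on_0[OF D] by simp
next
  case (pCons a q)
  have "D (poly (pCons a q) x) = D a + (x * D (poly q x) + poly q x * D x)"
    using derivation_on_add[OF D, of a "x * poly q x"] derivation_on_mult[OF D, of x "poly q x"] by simp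
  also have "\<dots> = poly (map_poly D (pCons a q)) x + poly (pderiv (pCons a q)) x * D x"
    using pCons.IH by (simp add: map_poly_pCons[of D, OF derivation_on_0[OF D]] pderiv_pCons algebra_simps)
  finally show ?case .
qed

lemma adjoin_low_degree_poly:
  fixes L :: "'a set"
  assumes L: "subfield L" "Fp \<subseteq> L" and c: "c \<in> adjoin L x"
  obtains r where "r \<in> polys_over L" "degree r < CHAR('a)" "c = poly r x"
proof -
  from c obtain q where q: "q \<in> polys_over L" "c = poly q x" unfolding adjoin_def by blast
  from polys_over_div_monic[OF L(1) pth_power_poly_polys_over[OF L] lead_coeff_pth_power_poly q(1)]
  obtain s r where sr: "r \<in> polys_over L" "q = pth_power_poly x * s + r"
    "r = 0 \<or> degree r < degree (pth_power_poly x)" by blast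
  have "c = poly r x" using q(2) sr(2) poly_pth_power_poly[of x] by simp
  moreover have "degree r < CHAR('a)" using sr(3) degree_pth_power_poly[of x] charpos by auto
  ultimately show ?thesis using that sr(1) by blast
qed

lemma pderiv_eq_0_low_degree:
  fixes r :: "'a poly"
  assumes "pderiv r = 0" "degree r < CHAR('a)"
  shows "r = [:coeff r 0:]"
proof -
  have "coeff r i = 0" if "i \<ge> 1" for i
  proof (cases "i \<le> degree r")
    case True
    have "of_nat i * coeff r i = coeff (pderiv r) (i - 1)" using that by (simp add: coeff_pderiv)
    moreover have "of_nat i \<noteq> (0::'a)" using of_nat_neq_0_below_CHAR[of i] that True assms(2) by simp
    ultimately show ?thesis using assms(1) by simp
  next
    case False
    then show ?thesis by (simp add: coeff_eq_0)
  qed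
  then show ?thesis by (intro poly_eqI) (simp add: coeff_pCons split: nat.split)
qed

(* A derivation vanishing on F^p(R \<union> {c}) with D x = 1 kills the derivative of the
   reduced expression of c in x over F^p(R); so that expression is constant. *)
lemma Fp_adj_exchange:
  fixes R :: "'a set" and c x :: 'a
  assumes c: "c \<notin> Fp_adj R" and x: "x \<notin> Fp_adj (insert c R)"
  shows "c \<notin> Fp_adj (insert x R)"
proof
  assume cx: "c \<in> Fp_adj (insert x R)"
  define K0 where "K0 = Fp_adj (insert c R)"
  define L0 where "L0 = Fp_adj R"
  have L0K0: "L0 \<subseteq> K0" unfolding L0_def K0_def by (rule Fp_adj_mono) blast
  have sK0: "subfield K0" "Fp \<subseteq> K0" unfolding K0_def by (rule Fp_adj_subfield, rule Fp_subset_Fp_adj)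
  have sL0: "subfield L0" "Fp \<subseteq> L0" unfolding L0_def by (rule Fp_adj_subfield, rule Fp_subset_Fp_adj)
  have xL0: "x \<notin> L0" using x L0K0 unfolding K0_def by blast
  from derivation_extends_with_value[OF sK0 derivation_on_zero, of x 1] x obtain D where
    D: "derivation_on UNIV D" "\<forall>y\<in>K0. D y = 0" "D x = 1" unfolding K0_def by blast
  have "c \<in> adjoin L0 x" using cx unfolding L0_def Fp_adj_insert .
  then obtain r where r: "r \<in> polys_over L0" "degree r < CHAR('a)" "c = poly r x"
    using adjoin_low_degree_poly[OF sL0] by blast
  have "c \<in> K0" unfolding K0_def using subset_Fp_adj[of "insert c R"] by blast
  then have "D c = 0" using D(2) by blast
  moreover have "map_poly D r = 0"
    using r(1) L0K0 D(2) by (intro poly_eqI) (auto simp: coeff_map_derivation[OF D(1)] polys_over_def)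
  ultimately have "poly (pderiv r) x = 0" using derivation_poly_chain_rule[OF D(1), of r x] r(3) D(3) by simp
  moreover have "pderiv r \<in> polys_over L0" using polys_over_pderiv[OF sL0(1) r(1)] .
  moreover have "degree (pderiv r) < CHAR('a)" using degree_pderiv_le[of r] r(2) by linarith
  ultimately have "pderiv r = 0" using polys_over_root_low_degree[OF sL0 xL0] by blast
  then have "r = [:coeff r 0:]" using pderiv_eq_0_low_degree r(2) by blast
  then have "c = coeff r 0" using r(3) by (metis poly_pCons poly_0 mult_zero_right add_0_right)
  then have "c \<in> L0" using r(1) unfolding polys_over_def by simp
  then show False using c unfolding L0_def by blast
qed

end

(* The classical form of p-independence: no element lies in F^p(the others). *)
definition p_irredundant :: "'a::field set \<Rightarrow> bool" where
  "p_irredundant C \<longleftrightarrow> (\<forall>c\<in>C. c \<notin> Fp_adj (C - {c}))"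

context char_p begin

lemma p_irredundant_insert:
  fixes C :: "'a set"
  assumes C: "p_irredundant C" and x: "x \<notin> Fp_adj C"
  shows "p_irredundant (insert x C)"
  unfolding p_irredundant_def
proof
  fix c assume c: "c \<in> insert x C"
  have xC: "x \<notin> C" using x subset_Fp_adj[of C] by blast
  show "c \<notin> Fp_adj (insert x C - {c})"
  proof (cases "c = x")
    case True
    then show ?thesis using x xC by (simp add: insert_Diff_if)
  next
    case False
    then have cC: "c \<in> C" using c by simp
    define R where "R = C - {c}"
    have 1: "c \<notin> Fp_adj R" using C cC unfolding p_irredundant_def R_def by blast
    have "insert c R = C" unfolding R_def using cC by blast
    then have 2: "x \<notin> Fp_adj (insert c R)" using x by simp
    have "insert x C - {c} = insert x R" unfolding R_def using False by blast
    then show ?thesis using Fp_adj_exchange[OF 1 2] by simp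
  qed
qed

lemma p_irredundant_extend:
  fixes C :: "'a set"
  assumes "finite X" "p_irredundant C"
  shows "\<exists>B. finite B \<and> B \<inter> C = {} \<and> p_irredundant (C \<union> B) \<and> X \<subseteq> Fp_adj (C \<union> B)"
  using assms
proof (induction X rule: finite_induct)
  case empty then show ?case by (intro exI[of _ "{}"]) simp
next
  case (insert x X)
  then obtain B where B: "finite B" "B \<inter> C = {}" "p_irredundant (C \<union> B)" "X \<subseteq> Fp_adj (C \<union> B)" by blast
  show ?case
  proof (cases "x \<in> Fp_adj (C \<union> B)")
    case True then show ?thesis using B by blast
  next
    case False
    have xC: "x \<notin> C" using False subset_Fp_adj[of "C \<union> B"] by blast
    have e: "insert x (C \<union> B) = C \<union> insert x B" by blast
    have p: "p_irredundant (C \<union> insert x B)" using p_irredundant_insert[OF B(3) False] unfolding e .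
    have m: "Fp_adj (C \<union> B) \<subseteq> Fp_adj (C \<union> insert x B)" by (rule Fp_adj_mono) blast
    have xi: "x \<in> Fp_adj (C \<union> insert x B)" using subset_Fp_adj[of "C \<union> insert x B"] by blast
    have f: "finite (insert x B)" using B(1) by simp
    have d: "insert x B \<inter> C = {}" using B(2) xC by blast
    have "insert x X \<subseteq> Fp_adj (C \<union> insert x B)" using B(4) m xi by blast
    then show ?thesis using f d p by blast
  qed
qed

lemma p_irredundant_dual_derivation:
  fixes C :: "'a set"
  assumes C: "p_irredundant C" and c: "c \<in> C"
  shows "\<exists>D. derivation_on UNIV D \<and> D c = 1 \<and> (\<forall>c'\<in>C. c' \<noteq> c \<longrightarrow> D c' = 0)"
proof -
  have c': "c \<notin> Fp_adj (C - {c})" using C c unfolding p_irredundant_def by blast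
  from derivation_extends_with_value[OF Fp_adj_subfield Fp_subset_Fp_adj derivation_on_zero c', of 1] obtain D where
    D: "derivation_on UNIV D" "\<forall>y\<in>Fp_adj (C - {c}). D y = 0" "D c = 1" by blast
  have "\<forall>c'\<in>C. c' \<noteq> c \<longrightarrow> D c' = 0" using D(2) subset_Fp_adj[of "C - {c}"] by blast
  then show ?thesis using D by blast
qed

end

(* F^p as a field type, to obtain uniqueness of [L : F^p] from the library's vector_space locale.
   The typedef needs a subfield in every characteristic, hence UNIV when CHAR('a) = 0. *)
definition Fp_or_UNIV :: "'a::field set" where "Fp_or_UNIV = (if 0 < CHAR('a) then Fp else UNIV)"

lemma Fp_or_UNIV_subfield: "subfield (Fp_or_UNIV :: 'a::field set)"
proof (cases "0 < CHAR('a)")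
  case True
  then interpret char_p "TYPE('a)" by unfold_locales
  show ?thesis unfolding Fp_or_UNIV_def using True Fp_subfield by simp
next
  case False then show ?thesis unfolding Fp_or_UNIV_def by (simp add: subfield_UNIV)
qed

typedef (overloaded) ('a::field) fp_field = "Fp_or_UNIV :: 'a set"
  using subfield_0[OF Fp_or_UNIV_subfield] by blast

setup_lifting type_definition_fp_field

instantiation fp_field :: (field) field
begin
lift_definition zero_fp_field :: "'a fp_field" is 0 by (rule subfield_0[OF Fp_or_UNIV_subfield])
lift_definition one_fp_field :: "'a fp_field" is 1 by (rule subfield_1[OF Fp_or_UNIV_subfield])
lift_definition plus_fp_field :: "'a fp_field \<Rightarrow> 'a fp_field \<Rightarrow> 'a fp_field" is "(+)" by (rule subfield_add[OF Fp_or_UNIV_subfield])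
lift_definition minus_fp_field :: "'a fp_field \<Rightarrow> 'a fp_field \<Rightarrow> 'a fp_field" is "(-)" by (rule subfield_diff[OF Fp_or_UNIV_subfield])
lift_definition uminus_fp_field :: "'a fp_field \<Rightarrow> 'a fp_field" is uminus by (rule subfield_uminus[OF Fp_or_UNIV_subfield])
lift_definition times_fp_field :: "'a fp_field \<Rightarrow> 'a fp_field \<Rightarrow> 'a fp_field" is "(*)" by (rule subfield_mult[OF Fp_or_UNIV_subfield])
lift_definition inverse_fp_field :: "'a fp_field \<Rightarrow> 'a fp_field" is inverse by (rule subfield_inverse[OF Fp_or_UNIV_subfield])
lift_definition divide_fp_field :: "'a fp_field \<Rightarrow> 'a fp_field \<Rightarrow> 'a fp_field" is "(/)" by (rule subfield_divide[OF Fp_or_UNIV_subfield])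
instance
  by standard (transfer; simp add: algebra_simps divide_inverse)+
end

lemma Rep_fp_field_plus: "Rep_fp_field (a + b) = Rep_fp_field a + Rep_fp_field b" by transfer simp
lemma Rep_fp_field_times: "Rep_fp_field (a * b) = Rep_fp_field a * Rep_fp_field b" by transfer simp
lemma Rep_fp_field_one: "Rep_fp_field 1 = 1" by transfer simp
lemma Rep_fp_field_zero: "Rep_fp_field 0 = 0" by transfer simp

interpretation Fp_space: vector_space "\<lambda>(c::'a::field fp_field) (x::'a). Rep_fp_field c * x"
  by unfold_locales (simp_all add: Rep_fp_field_plus Rep_fp_field_times Rep_fp_field_one algebra_simps)

context char_p begin

lemma Fp_or_UNIV_eq: "(Fp_or_UNIV :: 'a set) = Fp"
  unfolding Fp_or_UNIV_def using charpos by simp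

lemma lin_indep_over_Fp_imp_independent: "lin_indep_over (Fp :: 'a set) B \<Longrightarrow> Fp_space.independent B"
  unfolding Fp_space.independent_explicit_finite_subsets
proof (intro allI impI ballI)
  fix S u v assume li: "lin_indep_over (Fp :: 'a set) B" and S: "S \<subseteq> B" "finite S"
    and su: "(\<Sum>v\<in>S. Rep_fp_field (u v) * v) = 0" and v: "v \<in> S"
  have Rfp: "\<forall>b\<in>S. Rep_fp_field (u b) \<in> Fp" using Rep_fp_field Fp_or_UNIV_eq by blast
  have H: "\<And>B0 c. finite B0 \<Longrightarrow> B0 \<subseteq> B \<Longrightarrow> (\<forall>b\<in>B0. c b \<in> Fp) \<Longrightarrow> (\<Sum>b\<in>B0. c b * b) = 0 \<Longrightarrow> \<forall>b\<in>B0. c b = 0"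
    using li unfolding lin_indep_over_def by blast
  have "\<forall>b\<in>S. Rep_fp_field (u b) = 0" using H[OF S(2) S(1) Rfp su] .
  then have "Rep_fp_field (u v) = Rep_fp_field 0" using v Rep_fp_field_zero by simp
  then show "u v = 0" using Rep_fp_field_inject by blast
qed

lemma span_over_Fp_subset_span: "span_over (Fp :: 'a set) B \<subseteq> Fp_space.span B"
proof
  fix y assume "y \<in> span_over Fp B"
  then obtain B0 c where y: "y = (\<Sum>b\<in>B0. c b * b)" "finite B0" "B0 \<subseteq> B" "\<forall>b\<in>B0. c b \<in> Fp"
    unfolding span_over_def by blast
  have "y = (\<Sum>b\<in>B0. Rep_fp_field (Abs_fp_field (c b)) * b)"
    unfolding y(1)
  proof (rule sum.cong[OF refl])
    fix b assume "b \<in> B0"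
    then have "c b \<in> Fp_or_UNIV" using y(4) Fp_or_UNIV_eq by blast
    then show "c b * b = Rep_fp_field (Abs_fp_field (c b)) * b" by (simp add: Abs_fp_field_inverse)
  qed
  then have "\<exists>t r. y = (\<Sum>a\<in>t. Rep_fp_field (r a) * a) \<and> finite t \<and> t \<subseteq> B"
    using y by (intro exI[of _ B0] exI[of _ "\<lambda>b. Abs_fp_field (c b)"]) simp
  then show "y \<in> Fp_space.span B" unfolding Fp_space.span_explicit by blast
qed

lemma ext_degree_unique:
  assumes "ext_degree_is (Fp :: 'a set) L d1" "ext_degree_is (Fp :: 'a set) L d2"
  shows "d1 = d2"
proof -
  have le: "d1 \<le> d2" if "ext_degree_is (Fp :: 'a set) L d1" "ext_degree_is (Fp :: 'a set) L d2" for d1 d2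
  proof -
    from that obtain B1 B2 where B1: "finite B1" "card B1 = d1" "B1 \<subseteq> L" "lin_indep_over Fp B1"
      and B2: "finite B2" "card B2 = d2" "span_over Fp B2 = L"
      unfolding ext_degree_is_def by blast
    have "B1 \<subseteq> Fp_space.span B2" using B1(3) B2(3) span_over_Fp_subset_span[of B2] by blast
    from Fp_space.independent_span_bound[OF B2(1) lin_indep_over_Fp_imp_independent[OF B1(4)] this] show ?thesis
      using B1 B2 by simp
  qed
  show ?thesis using le[OF assms] le[OF assms(2) assms(1)] by simp
qed

lemma p_independent_imp_p_irredundant:
  fixes A :: "'a set"
  assumes A: "p_independent A" "finite A"
  shows "p_irredundant A"
  unfolding p_irredundant_def
proof
  fix a assume a: "a \<in> A"
  show "a \<notin> Fp_adj (A - {a})"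
  proof
    assume aa: "a \<in> Fp_adj (A - {a})"
    have "A \<subseteq> Fp_adj (A - {a})" using aa subset_Fp_adj[of "A - {a}"] by blast
    then have "Fp_adj A \<subseteq> Fp_adj (A - {a})" by (rule Fp_adj_subset)
    moreover have "Fp_adj (A - {a}) \<subseteq> Fp_adj A" by (rule Fp_adj_mono) blast
    ultimately have eq: "Fp_adj A = Fp_adj (A - {a})" by blast
    have d1: "ext_degree_is Fp (Fp_adj A) (CHAR('a) ^ card A)"
      using A unfolding p_independent_def by blast
    have d2: "ext_degree_is Fp (Fp_adj A) (CHAR('a) ^ card (A - {a}))"
      using A unfolding p_independent_def eq by blast
    have "CHAR('a) ^ card A = CHAR('a) ^ card (A - {a})" by (rule ext_degree_unique[OF d1 d2])
    moreover have "card (A - {a}) < card A" by (rule card_Diff1_less[OF A(2) a])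
    moreover have "1 < CHAR('a)" using prime_CHAR prime_gt_1_nat by blast
    ultimately show False by simp
  qed
qed

end

section \<open>Differential forms\<close>

lemma rels_diff: "f \<in> rels \<Longrightarrow> g \<in> rels \<Longrightarrow> (\<lambda>w. f w - g w) \<in> rels"
proof -
  assume f: "f \<in> rels" and g: "g \<in> rels"
  have "(\<lambda>w. (-1) * g w) \<in> rels" using g by (rule rels.smul)
  from rels.add[OF f this] show ?thesis by simp
qed

lemma rels_sum: "finite I \<Longrightarrow> (\<forall>i\<in>I. f i \<in> rels) \<Longrightarrow> (\<lambda>w. \<Sum>i\<in>I. f i w) \<in> rels"
proof (induction I rule: finite_induct)
  case empty then show ?case using rels.zero by simp
next
  case (insert x F) then show ?case using rels.add[of "f x" "\<lambda>w. \<Sum>i\<in>F. f i w"] by simp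
qed

lemma omega_eq_refl: "omega_eq f f"
  unfolding omega_eq_def using rels.zero by simp

lemma omega_eq_sym: "omega_eq f g \<Longrightarrow> omega_eq g f"
  unfolding omega_eq_def
proof -
  assume "(\<lambda>w. f w - g w) \<in> rels"
  from rels.smul[OF this, of "-1"] show "(\<lambda>w. g w - f w) \<in> rels" by simp
qed

lemma omega_eq_trans: "omega_eq f g \<Longrightarrow> omega_eq g h \<Longrightarrow> omega_eq f h"
  unfolding omega_eq_def
proof -
  assume a: "(\<lambda>w. f w - g w) \<in> rels" and b: "(\<lambda>w. g w - h w) \<in> rels"
  from rels.add[OF a b] show "(\<lambda>w. f w - h w) \<in> rels" by simp
qed

lemma omega_eq_add: "omega_eq f g \<Longrightarrow> omega_eq f' g' \<Longrightarrow> omega_eq (\<lambda>w. f w + f' w) (\<lambda>w. g w + g' w)"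
  unfolding omega_eq_def using rels.add[of "\<lambda>w. f w - g w" "\<lambda>w. f' w - g' w"]
  by (simp add: algebra_simps)

lemma omega_eq_scale: "omega_eq f g \<Longrightarrow> omega_eq (\<lambda>w. c * f w) (\<lambda>w. c * g w)"
  unfolding omega_eq_def using rels.smul[of "\<lambda>w. f w - g w" c]
  by (simp add: algebra_simps)

lemma omega_eq_sum: "finite I \<Longrightarrow> (\<forall>i\<in>I. omega_eq (f i) (g i)) \<Longrightarrow>
   omega_eq (\<lambda>w. \<Sum>i\<in>I. f i w) (\<lambda>w. \<Sum>i\<in>I. g i w)"
  unfolding omega_eq_def using rels_sum[of I "\<lambda>i w. f i w - g i w"]
  by (simp add: sum_subtractf)

lemma omega_eq_0_iff: "omega_eq f (\<lambda>_. 0) \<longleftrightarrow> f \<in> rels"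
  unfolding omega_eq_def by simp

lemma fmul_word_left:
  "fmul (word u) h w = (if (\<exists>w'. w = u @ w') then h (drop (length u) w) else 0)"
proof -
  have "fmul (word u) h w = (\<Sum>i\<le>length w. (if i = length u \<and> (\<exists>w'. w = u @ w') then h (drop (length u) w) else 0))"
    unfolding fmul_def word_def
  proof (rule sum.cong[OF refl])
    fix i assume i: "i \<in> {..length w}"
    show "(if take i w = u then 1 else 0) * h (drop i w) =
          (if i = length u \<and> (\<exists>w'. w = u @ w') then h (drop (length u) w) else 0)"
    proof (cases "take i w = u")
      case True
      then have "length u = i" using i by auto
      moreover have "w = u @ drop i w" using True by (metis append_take_drop_id)
      ultimately show ?thesis using True by auto
    next
      case False
      have nc: "\<not> (i = length u \<and> (\<exists>w'. w = u @ w'))" using False by auto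
      show ?thesis unfolding if_not_P[OF nc] if_not_P[OF False] by simp
    qed
  qed
  also have "\<dots> = (if (\<exists>w'. w = u @ w') then h (drop (length u) w) else 0)"
    by (auto simp: sum.delta')
  finally show ?thesis .
qed

lemma fmul_word_right:
  "fmul h (word v) w = (if (\<exists>w'. w = w' @ v) then h (take (length w - length v) w) else 0)"
proof -
  have "fmul h (word v) w = (\<Sum>i\<le>length w. (if i = length w - length v \<and> (\<exists>w'. w = w' @ v) then h (take (length w - length v) w) else 0))"
    unfolding fmul_def word_def
  proof (rule sum.cong[OF refl])
    fix i assume i: "i \<in> {..length w}"
    show "h (take i w) * (if drop i w = v then 1 else 0) =
          (if i = length w - length v \<and> (\<exists>w'. w = w' @ v) then h (take (length w - length v) w) else 0)"
    proof (cases "drop i w = v")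
      case True
      then have "i = length w - length v" using i by auto
      moreover have "w = take i w @ v" using True by (metis append_take_drop_id)
      ultimately show ?thesis using True by auto
    next
      case False
      have nc: "\<not> (i = length w - length v \<and> (\<exists>w'. w = w' @ v))" using False by auto
      show ?thesis unfolding if_not_P[OF nc] if_not_P[OF False] by simp
    qed
  qed
  also have "\<dots> = (if (\<exists>w'. w = w' @ v) then h (take (length w - length v) w) else 0)"
    by (auto simp: sum.delta')
  finally show ?thesis .
qed

lemma fmul_word_word: "fmul (word u) (word v) = word (u @ v)"
proof (rule ext)
  fix w
  show "fmul (word u) (word v) w = word (u @ v) w"
    unfolding fmul_word_left by (auto simp: word_def)
qed

lemma fmul_word_fmul_word: "fmul (word a) (fmul (word b) h) = fmul (word (a @ b)) h"
proof (rule ext)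
  fix w
  show "fmul (word a) (fmul (word b) h) w = fmul (word (a @ b)) h w"
  proof (cases "\<exists>w'. w = a @ b @ w'")
    case True
    then obtain w' where w: "w = a @ b @ w'" by blast
    show ?thesis unfolding w by (simp add: fmul_word_left)
  next
    case False
    have l: "fmul (word a) (fmul (word b) h) w = 0"
    proof (cases "\<exists>w'. w = a @ w'")
      case True
      then obtain w1 where w: "w = a @ w1" by blast
      have "\<not> (\<exists>w''. w1 = b @ w'')" using False w by auto
      then show ?thesis unfolding w by (simp add: fmul_word_left)
    next
      case False
      then show ?thesis by (simp add: fmul_word_left)
    qed
    have r: "fmul (word (a @ b)) h w = 0" using False by (simp add: fmul_word_left)
    show ?thesis using l r by simp
  qed
qed

lemma fmul_fmul_word_word: "fmul (fmul h (word a)) (word b) = fmul h (word (a @ b))"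
proof (rule ext)
  fix w
  show "fmul (fmul h (word a)) (word b) w = fmul h (word (a @ b)) w"
  proof (cases "\<exists>w'. w = w' @ a @ b")
    case True
    then obtain w' where w: "w = w' @ a @ b" by blast
    show ?thesis unfolding w by (simp add: fmul_word_right)
  next
    case False
    have l: "fmul (fmul h (word a)) (word b) w = 0"
    proof (cases "\<exists>w'. w = w' @ b")
      case True
      then obtain w1 where w: "w = w1 @ b" by blast
      have "\<not> (\<exists>w''. w1 = w'' @ a)" using False w by auto
      then show ?thesis unfolding w by (simp add: fmul_word_right)
    next
      case False
      then show ?thesis by (simp add: fmul_word_right)
    qed
    have r: "fmul h (word (a @ b)) w = 0" using False by (simp add: fmul_word_right)
    show ?thesis using l r by simp
  qed
qed

lemma fmul_assoc_word_word: "fmul (fmul (word a) h) (word b) = fmul (word a) (fmul h (word b))"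
proof (rule ext)
  fix w
  show "fmul (fmul (word a) h) (word b) w = fmul (word a) (fmul h (word b)) w"
  proof (cases "\<exists>w'. w = a @ w' @ b")
    case True
    then obtain w' where w: "w = a @ w' @ b" by blast
    show ?thesis unfolding w by (simp add: fmul_word_right fmul_word_left)
  next
    case False
    have l: "fmul (fmul (word a) h) (word b) w = 0"
    proof (cases "\<exists>w'. w = w' @ b")
      case True
      then obtain w1 where w: "w = w1 @ b" by blast
      have "\<not> (\<exists>w''. w1 = a @ w'')" using False w by auto
      then show ?thesis unfolding w by (simp add: fmul_word_right fmul_word_left)
    next
      case False
      then show ?thesis by (simp add: fmul_word_right)
    qed
    have r: "fmul (word a) (fmul h (word b)) w = 0"
    proof (cases "\<exists>w'. w = a @ w'")
      case True
      then obtain w1 where w: "w = a @ w1" by blast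
      have "\<not> (\<exists>w''. w1 = w'' @ b)" using False w by auto
      then show ?thesis unfolding w by (simp add: fmul_word_right fmul_word_left)
    next
      case False
      then show ?thesis by (simp add: fmul_word_left)
    qed
    show ?thesis using l r by simp
  qed
qed

lemma fmul_sum_left: "fmul (\<lambda>w. \<Sum>i\<in>I. c i * f i w) g = (\<lambda>w. \<Sum>i\<in>I. c i * fmul (f i) g w)"
  unfolding fmul_def
proof (rule ext)
  fix w
  have "(\<Sum>j\<le>length w. (\<Sum>i\<in>I. c i * f i (take j w)) * g (drop j w))
      = (\<Sum>j\<le>length w. \<Sum>i\<in>I. c i * (f i (take j w) * g (drop j w)))"
    by (simp add: sum_distrib_right mult.assoc)
  also have "\<dots> = (\<Sum>i\<in>I. \<Sum>j\<le>length w. c i * (f i (take j w) * g (drop j w)))"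
    by (rule sum.swap)
  also have "\<dots> = (\<Sum>i\<in>I. c i * (\<Sum>j\<le>length w. f i (take j w) * g (drop j w)))"
    by (simp add: sum_distrib_left)
  finally show "(\<Sum>j\<le>length w. (\<Sum>i\<in>I. c i * f i (take j w)) * g (drop j w)) =
     (\<Sum>i\<in>I. c i * (\<Sum>j\<le>length w. f i (take j w) * g (drop j w)))" .
qed

lemma fmul_sum_right: "fmul g (\<lambda>w. \<Sum>i\<in>I. c i * f i w) = (\<lambda>w. \<Sum>i\<in>I. c i * fmul g (f i) w)"
  unfolding fmul_def
proof (rule ext)
  fix w
  have "(\<Sum>j\<le>length w. g (take j w) * (\<Sum>i\<in>I. c i * f i (drop j w)))
      = (\<Sum>j\<le>length w. \<Sum>i\<in>I. c i * (g (take j w) * f i (drop j w)))"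
    by (simp add: sum_distrib_left mult.left_commute)
  also have "\<dots> = (\<Sum>i\<in>I. \<Sum>j\<le>length w. c i * (g (take j w) * f i (drop j w)))"
    by (rule sum.swap)
  also have "\<dots> = (\<Sum>i\<in>I. c i * (\<Sum>j\<le>length w. g (take j w) * f i (drop j w)))"
    by (simp add: sum_distrib_left)
  finally show "(\<Sum>j\<le>length w. g (take j w) * (\<Sum>i\<in>I. c i * f i (drop j w))) =
     (\<Sum>i\<in>I. c i * (\<Sum>j\<le>length w. g (take j w) * f i (drop j w)))" .
qed

lemma fmul_diff_left: "fmul (\<lambda>w. f w - g w) h = (\<lambda>w. fmul f h w - fmul g h w)"
  unfolding fmul_def by (rule ext) (simp add: algebra_simps sum_subtractf)

lemma fmul_diff_right: "fmul h (\<lambda>w. f w - g w) = (\<lambda>w. fmul h f w - fmul h g w)"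
  unfolding fmul_def by (rule ext) (simp add: algebra_simps sum_subtractf)

lemma fmul_add_left: "fmul (\<lambda>w. f w + g w) h = (\<lambda>w. fmul f h w + fmul g h w)"
  unfolding fmul_def by (rule ext) (simp add: algebra_simps sum.distrib)

lemma fmul_add_right: "fmul h (\<lambda>w. f w + g w) = (\<lambda>w. fmul h f w + fmul h g w)"
  unfolding fmul_def by (rule ext) (simp add: algebra_simps sum.distrib)

lemma fmul_scale_left: "fmul (\<lambda>w. c * f w) h = (\<lambda>w. c * fmul f h w)"
  unfolding fmul_def by (rule ext) (simp add: sum_distrib_left mult.assoc)

lemma fmul_scale_right: "fmul h (\<lambda>w. c * f w) = (\<lambda>w. c * fmul h f w)"
  unfolding fmul_def by (rule ext) (simp add: sum_distrib_left mult_ac)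

lemma fmul_zero_left: "fmul (\<lambda>_. 0) h = (\<lambda>_. 0)"
  unfolding fmul_def by simp

lemma fmul_zero_right: "fmul h (\<lambda>_. 0) = (\<lambda>_. 0)"
  unfolding fmul_def by simp

lemma rels_fmul_word_left: "r \<in> rels \<Longrightarrow> fmul (word u) r \<in> rels"
proof (induction rule: rels.induct)
  case zero then show ?case by (simp add: fmul_zero_right rels.zero)
next
  case (add f g) then show ?case by (simp add: fmul_add_right rels.add)
next
  case (smul f c) then show ?case by (simp add: fmul_scale_right rels.smul)
next
  case (gen g u' v) then show ?case by (simp add: fmul_word_fmul_word rels.gen)
qed

lemma rels_fmul_word_right: "r \<in> rels \<Longrightarrow> fmul r (word v) \<in> rels"
proof (induction rule: rels.induct)
  case zero then show ?case by (simp add: fmul_zero_left rels.zero)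
next
  case (add f g) then show ?case by (simp add: fmul_add_left rels.add)
next
  case (smul f c) then show ?case by (simp add: fmul_scale_left rels.smul)
next
  case (gen g u' v') then show ?case by (simp add: fmul_assoc_word_word fmul_fmul_word_word rels.gen)
qed

lemma omega_eq_fmul_word_left: "omega_eq f g \<Longrightarrow> omega_eq (fmul (word u) f) (fmul (word u) g)"
  unfolding omega_eq_def using rels_fmul_word_left by (fastforce simp: fmul_diff_right[symmetric])

lemma omega_eq_fmul_word_right: "omega_eq f g \<Longrightarrow> omega_eq (fmul f (word u)) (fmul g (word u))"
  unfolding omega_eq_def using rels_fmul_word_right by (fastforce simp: fmul_diff_left[symmetric])

definition word_comb :: "'a list set \<Rightarrow> ('a list \<Rightarrow> 'a::field) \<Rightarrow> ('a list \<Rightarrow> 'a)" where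
  "word_comb V \<mu> = (\<lambda>w. \<Sum>v\<in>V. \<mu> v * word v w)"

lemma rels_d_add_ctxt: "(\<lambda>w. word (u @ [a + b] @ v) w - word (u @ [a] @ v) w - word (u @ [b] @ v) w) \<in> rels"
proof -
  let ?g = "\<lambda>w. word [a + b] w - word [a] w - word [b] w"
  have g: "?g \<in> gens" unfolding gens_def by blast
  have "fmul (word u) (fmul ?g (word v)) = (\<lambda>w. word (u @ [a + b] @ v) w - word (u @ [a] @ v) w - word (u @ [b] @ v) w)"
    by (simp add: fmul_diff_left fmul_diff_right fmul_word_word)
  with rels.gen[OF g, of u v] show ?thesis by simp
qed

lemma rels_d_mult_ctxt: "(\<lambda>w. word (u @ [a * b] @ v) w - a * word (u @ [b] @ v) w - b * word (u @ [a] @ v) w) \<in> rels"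
proof -
  let ?g = "\<lambda>w. word [a * b] w - a * word [b] w - b * word [a] w"
  have g: "?g \<in> gens" unfolding gens_def by blast
  have "fmul (word u) (fmul ?g (word v)) = (\<lambda>w. word (u @ [a * b] @ v) w - a * word (u @ [b] @ v) w - b * word (u @ [a] @ v) w)"
    by (simp add: fmul_diff_left fmul_diff_right fmul_word_word fmul_scale_left fmul_scale_right)
  with rels.gen[OF g, of u v] show ?thesis by simp
qed

lemma rels_d_square_ctxt: "word (u @ [a, a] @ v) \<in> rels"
proof -
  have g: "word [a, a] \<in> gens" unfolding gens_def by blast
  have "fmul (word u) (fmul (word [a, a]) (word v)) = word (u @ [a, a] @ v)"
    by (simp add: fmul_word_word)
  with rels.gen[OF g, of u v] show ?thesis by simp
qed

lemma omega_eq_d_add_ctxt: "omega_eq (word (u @ [a + b] @ v)) (\<lambda>w. word (u @ [a] @ v) w + word (u @ [b] @ v) w)"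
  unfolding omega_eq_def using rels_d_add_ctxt[of u a b v] by (simp add: diff_diff_eq)

lemma omega_eq_d_mult_ctxt: "omega_eq (word (u @ [a * b] @ v)) (\<lambda>w. a * word (u @ [b] @ v) w + b * word (u @ [a] @ v) w)"
  unfolding omega_eq_def using rels_d_mult_ctxt[of u a b v] by (simp add: diff_diff_eq)

lemma omega_eq_d_square_ctxt: "omega_eq (word (u @ [a, a] @ v)) (\<lambda>_. 0)"
  unfolding omega_eq_def using rels_d_square_ctxt[of u a v] by simp

lemma rels_swap: "(\<lambda>w. word (u @ [x, y] @ v) w + word (u @ [y, x] @ v) w) \<in> rels"
proof -
  define W where "W p q = word (u @ [p, q] @ v)" for p q
  have r1: "W (x+y) (x+y) \<in> rels" unfolding W_def by (rule rels_d_square_ctxt)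
  have r2: "(\<lambda>w. W (x+y) (x+y) w - W x (x+y) w - W y (x+y) w) \<in> rels"
    unfolding W_def using rels_d_add_ctxt[of u x y "(x+y) # v"] by simp
  have r3: "(\<lambda>w. W x (x+y) w - W x x w - W x y w) \<in> rels"
    unfolding W_def using rels_d_add_ctxt[of "u @ [x]" x y v] by simp
  have r4: "(\<lambda>w. W y (x+y) w - W y x w - W y y w) \<in> rels"
    unfolding W_def using rels_d_add_ctxt[of "u @ [y]" x y v] by simp
  have r5: "W x x \<in> rels" unfolding W_def by (rule rels_d_square_ctxt)
  have r6: "W y y \<in> rels" unfolding W_def by (rule rels_d_square_ctxt)
  have "(\<lambda>w. W (x+y) (x+y) w - (W (x+y) (x+y) w - W x (x+y) w - W y (x+y) w)
     - (W x (x+y) w - W x x w - W x y w) - (W y (x+y) w - W y x w - W y y w) - W x x w - W y y w) \<in> rels"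
    by (intro rels_diff r1 r2 r3 r4 r5 r6)
  moreover have "(\<lambda>w. W (x+y) (x+y) w - (W (x+y) (x+y) w - W x (x+y) w - W y (x+y) w)
     - (W x (x+y) w - W x x w - W x y w) - (W y (x+y) w - W y x w - W y y w) - W x x w - W y y w)
     = (\<lambda>w. W x y w + W y x w)"
    by (rule ext) (simp add: algebra_simps)
  ultimately show ?thesis unfolding W_def by simp
qed

lemma omega_eq_swap: "omega_eq (word (u @ [x, y] @ v)) (\<lambda>w. - word (u @ [y, x] @ v) w)"
  unfolding omega_eq_def using rels_swap[of u x y v] by simp

lemma omega_eq_trans_scaled:
  "omega_eq f (\<lambda>w. a * g w) \<Longrightarrow> omega_eq g (\<lambda>w. b * h w) \<Longrightarrow> omega_eq f (\<lambda>w. (a * b) * h w)"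
proof -
  assume 1: "omega_eq f (\<lambda>w. a * g w)" and 2: "omega_eq g (\<lambda>w. b * h w)"
  from omega_eq_scale[OF 2, of a] have "omega_eq (\<lambda>w. a * g w) (\<lambda>w. (a * b) * h w)"
    by (simp add: mult.assoc)
  from omega_eq_trans[OF 1 this] show ?thesis .
qed

lemma omega_eq_move_letter: "\<exists>\<sigma>. (\<sigma> = 1 \<or> \<sigma> = -1) \<and> omega_eq (word (u @ y @ s # v)) (\<lambda>w. \<sigma> * word (u @ s # y @ v) w)"
proof (induction y arbitrary: u)
  case Nil
  show ?case by (rule exI[of _ 1]) (simp add: omega_eq_refl)
next
  case (Cons y0 y')
  from Cons.IH[of "u @ [y0]"] obtain \<sigma> where s: "\<sigma> = 1 \<or> \<sigma> = -1"
    and e: "omega_eq (word ((u @ [y0]) @ y' @ s # v)) (\<lambda>w. \<sigma> * word ((u @ [y0]) @ s # y' @ v) w)" by blast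
  have e2: "omega_eq (word (u @ [y0, s] @ (y' @ v))) (\<lambda>w. (-1) * word (u @ [s, y0] @ (y' @ v)) w)"
    using omega_eq_swap[of u y0 s "y' @ v"] by simp
  have "omega_eq (word (u @ (y0 # y') @ s # v)) (\<lambda>w. (\<sigma> * (-1)) * word (u @ s # (y0 # y') @ v) w)"
    using omega_eq_trans_scaled[OF e, of "-1"] e2 by simp
  then show ?case using s by (intro exI[of _ "\<sigma> * (-1)"]) auto
qed

lemma omega_eq_move_block: "\<exists>\<sigma>. (\<sigma> = 1 \<or> \<sigma> = -1) \<and> omega_eq (word (u @ y @ ss @ v)) (\<lambda>w. \<sigma> * word (u @ ss @ y @ v) w)"
proof (induction ss arbitrary: u)
  case Nil
  show ?case by (rule exI[of _ 1]) (simp add: omega_eq_refl)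
next
  case (Cons s ss')
  from omega_eq_move_letter[of u y s "ss' @ v"] obtain \<sigma>1 where s1: "\<sigma>1 = 1 \<or> \<sigma>1 = -1"
    and e1: "omega_eq (word (u @ y @ s # ss' @ v)) (\<lambda>w. \<sigma>1 * word (u @ s # y @ ss' @ v) w)" by blast
  from Cons.IH[of "u @ [s]"] obtain \<sigma>2 where s2: "\<sigma>2 = 1 \<or> \<sigma>2 = -1"
    and e2: "omega_eq (word ((u @ [s]) @ y @ ss' @ v)) (\<lambda>w. \<sigma>2 * word ((u @ [s]) @ ss' @ y @ v) w)" by blast
  have "omega_eq (word (u @ y @ (s # ss') @ v)) (\<lambda>w. (\<sigma>1 * \<sigma>2) * word (u @ (s # ss') @ y @ v) w)"
    using omega_eq_trans_scaled[OF e1, of \<sigma>2] e2 by simp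
  then show ?case using s1 s2 by (intro exI[of _ "\<sigma>1 * \<sigma>2"]) auto
qed

lemma omega_eq_fmul_word_left_scaled:
  "omega_eq g (\<lambda>w. \<sigma> * h w) \<Longrightarrow> omega_eq (fmul (word u) g) (\<lambda>w. \<sigma> * fmul (word u) h w)"
  using omega_eq_fmul_word_left[of g "\<lambda>w. \<sigma> * h w" u] by (simp add: fmul_scale_right)

lemma rels_if_omega_eq_scaled: "omega_eq X (\<lambda>w. \<sigma> * Y w) \<Longrightarrow> Y \<in> rels \<Longrightarrow> X \<in> rels"
proof -
  assume e: "omega_eq X (\<lambda>w. \<sigma> * Y w)" and Y: "Y \<in> rels"
  have "(\<lambda>w. X w - \<sigma> * Y w) \<in> rels" using e unfolding omega_eq_def .
  from rels.add[OF this rels.smul[OF Y, of \<sigma>]] show ?thesis by simp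
qed

lemma word_in_rels_if_not_distinct:
  assumes "\<not> distinct w"
  shows "word w \<in> rels"
proof -
  from not_distinct_decomp[OF assms] obtain xs ys zs y where w: "w = xs @ [y] @ ys @ [y] @ zs"
    by (elim exE) (rule that)
  from omega_eq_move_block[of "xs @ [y]" ys "[y]" zs] obtain \<sigma> where
    "omega_eq (word w) (\<lambda>v. \<sigma> * word (xs @ [y, y] @ ys @ zs) v)" unfolding w by auto
  then show ?thesis using rels_d_square_ctxt by (rule rels_if_omega_eq_scaled)
qed

lemma omega_eq_insort:
  fixes c :: "nat \<Rightarrow> 'a::field"
  assumes "sorted_wrt (<) L" "x \<notin> set L"
  shows "\<exists>\<sigma>. (\<sigma> = 1 \<or> \<sigma> = -1) \<and> omega_eq (word (c x # map c L)) (\<lambda>w. \<sigma> * word (map c (insort x L)) w)"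
  using assms
proof (induction L)
  case Nil
  show ?case by (auto intro!: exI[of _ 1] simp: omega_eq_refl)
next
  case (Cons y L)
  show ?case
  proof (cases "x < y")
    case True
    then show ?thesis by (auto intro!: exI[of _ 1] simp: omega_eq_refl)
  next
    case False
    with Cons.prems have yx: "y < x" "sorted_wrt (<) L" "x \<notin> set L" by auto
    with Cons.IH obtain \<sigma> where \<sigma>: "\<sigma> = 1 \<or> \<sigma> = -1"
      and e: "omega_eq (word (c x # map c L)) (\<lambda>w. \<sigma> * word (map c (insort x L)) w)" by blast
    have sw: "omega_eq (word (c x # c y # map c L)) (\<lambda>w. (-1) * word (c y # c x # map c L) w)"
      using omega_eq_swap[of "[]" "c x" "c y" "map c L"] by simp
    have "omega_eq (word (c y # c x # map c L)) (\<lambda>w. \<sigma> * word (c y # map c (insort x L)) w)"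
      using omega_eq_fmul_word_left_scaled[OF e, of "[c y]"] by (simp add: fmul_word_word)
    from omega_eq_trans_scaled[OF sw this]
    have "omega_eq (word (c x # map c (y # L))) (\<lambda>w. (-1 * \<sigma>) * word (map c (insort x (y # L))) w)"
      using yx(1) by simp
    with \<sigma> show ?thesis by (intro exI[of _ "-1 * \<sigma>"]) auto
  qed
qed

lemma omega_eq_sort:
  fixes c :: "nat \<Rightarrow> 'a::field"
  assumes "distinct N"
  shows "\<exists>\<sigma>. (\<sigma> = 1 \<or> \<sigma> = -1) \<and> omega_eq (word (map c N)) (\<lambda>w. \<sigma> * word (map c (sort N)) w)"
  using assms
proof (induction N)
  case Nil
  show ?case by (auto intro!: exI[of _ 1] simp: omega_eq_refl)
next
  case (Cons x N)
  then obtain \<sigma> where \<sigma>: "\<sigma> = 1 \<or> \<sigma> = -1"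
    and e: "omega_eq (word (map c N)) (\<lambda>w. \<sigma> * word (map c (sort N)) w)" by auto
  have e1: "omega_eq (word (map c (x # N))) (\<lambda>w. \<sigma> * word (c x # map c (sort N)) w)"
    using omega_eq_fmul_word_left_scaled[OF e, of "[c x]"] by (simp add: fmul_word_word)
  obtain \<tau> where \<tau>: "\<tau> = 1 \<or> \<tau> = -1"
    and e2: "omega_eq (word (c x # map c (sort N))) (\<lambda>w. \<tau> * word (map c (insort x (sort N))) w)"
    using omega_eq_insort[of "sort N" x c] Cons.prems by (auto simp: strict_sorted_iff)
  from omega_eq_trans_scaled[OF e1 e2]
  have "omega_eq (word (map c (x # N))) (\<lambda>w. (\<sigma> * \<tau>) * word (map c (sort (x # N))) w)" by simp
  with \<sigma> \<tau> show ?case by (intro exI[of _ "\<sigma> * \<tau>"]) auto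
qed

section \<open>Linear combinations of words\<close>

definition in_word_span :: "'a list set \<Rightarrow> ('a list \<Rightarrow> 'a::field) \<Rightarrow> bool" where
  "in_word_span P f \<longleftrightarrow> (\<exists>V \<mu>. finite V \<and> V \<subseteq> P \<and> omega_eq f (word_comb V \<mu>))"

lemma sum_if_restrict: "finite U \<Longrightarrow> V \<subseteq> U \<Longrightarrow> (\<Sum>v\<in>U. (if v \<in> V then g v else 0)) = (\<Sum>v\<in>V. g v)"
  using sum.inter_restrict[of U g V] by (simp add: Int_absorb1)

lemma in_word_span_word: "v \<in> P \<Longrightarrow> in_word_span P (word v)"
  unfolding in_word_span_def word_comb_def
  by (intro exI[of _ "{v}"] exI[of _ "\<lambda>_. 1"]) (simp add: omega_eq_refl)

lemma in_word_span_zero: "in_word_span P (\<lambda>_. 0)"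
  unfolding in_word_span_def word_comb_def
  by (intro exI[of _ "{}"]) (simp add: omega_eq_refl)

lemma in_word_span_add: "in_word_span P f \<Longrightarrow> in_word_span P g \<Longrightarrow> in_word_span P (\<lambda>w. f w + g w)"
proof -
  assume "in_word_span P f" "in_word_span P g"
  then obtain V1 \<mu>1 V2 \<mu>2 where 1: "finite V1" "V1 \<subseteq> P" "omega_eq f (word_comb V1 \<mu>1)"
    and 2: "finite V2" "V2 \<subseteq> P" "omega_eq g (word_comb V2 \<mu>2)" unfolding in_word_span_def by blast
  define \<mu> where "\<mu> v = (if v \<in> V1 then \<mu>1 v else 0) + (if v \<in> V2 then \<mu>2 v else 0)" for v
  have "word_comb (V1 \<union> V2) \<mu> = (\<lambda>w. word_comb V1 \<mu>1 w + word_comb V2 \<mu>2 w)"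
  proof (rule ext)
    fix w
    have "word_comb (V1 \<union> V2) \<mu> w = (\<Sum>v\<in>V1 \<union> V2. (if v \<in> V1 then \<mu>1 v * word v w else 0) + (if v \<in> V2 then \<mu>2 v * word v w else 0))"
      unfolding word_comb_def \<mu>_def by (rule sum.cong) (auto simp: distrib_right)
    also have "\<dots> = (\<Sum>v\<in>V1 \<union> V2. (if v \<in> V1 then \<mu>1 v * word v w else 0)) + (\<Sum>v\<in>V1 \<union> V2. (if v \<in> V2 then \<mu>2 v * word v w else 0))"
      by (rule sum.distrib)
    also have "\<dots> = word_comb V1 \<mu>1 w + word_comb V2 \<mu>2 w"
      unfolding word_comb_def using 1 2 by (simp add: sum_if_restrict)
    finally show "word_comb (V1 \<union> V2) \<mu> w = word_comb V1 \<mu>1 w + word_comb V2 \<mu>2 w" .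
  qed
  moreover have "omega_eq (\<lambda>w. f w + g w) (\<lambda>w. word_comb V1 \<mu>1 w + word_comb V2 \<mu>2 w)"
    by (rule omega_eq_add[OF 1(3) 2(3)])
  ultimately show ?thesis unfolding in_word_span_def using 1 2
    by (intro exI[of _ "V1 \<union> V2"] exI[of _ \<mu>]) auto
qed

lemma in_word_span_scale: "in_word_span P f \<Longrightarrow> in_word_span P (\<lambda>w. c * f w)"
proof -
  assume "in_word_span P f"
  then obtain V \<mu> where 1: "finite V" "V \<subseteq> P" "omega_eq f (word_comb V \<mu>)" unfolding in_word_span_def by blast
  have "word_comb V (\<lambda>v. c * \<mu> v) = (\<lambda>w. c * word_comb V \<mu> w)"
    unfolding word_comb_def by (rule ext) (simp add: sum_distrib_left mult.assoc)
  with omega_eq_scale[OF 1(3), of c] show ?thesis unfolding in_word_span_def using 1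
    by (intro exI[of _ V] exI[of _ "\<lambda>v. c * \<mu> v"]) auto
qed

lemma in_word_span_omega_eq: "omega_eq f g \<Longrightarrow> in_word_span P g \<Longrightarrow> in_word_span P f"
  unfolding in_word_span_def using omega_eq_trans by blast

lemma in_word_span_sum: "finite I \<Longrightarrow> (\<forall>i\<in>I. in_word_span P (f i)) \<Longrightarrow> in_word_span P (\<lambda>w. \<Sum>i\<in>I. f i w)"
proof (induction I rule: finite_induct)
  case empty then show ?case using in_word_span_zero by simp
next
  case (insert x F) then show ?case using in_word_span_add[of P "f x" "\<lambda>w. \<Sum>i\<in>F. f i w"] by simp
qed

lemma in_word_span_mono: "P \<subseteq> Q \<Longrightarrow> in_word_span P f \<Longrightarrow> in_word_span Q f"
  unfolding in_word_span_def by blast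

lemma in_word_span_word_comb: "finite V \<Longrightarrow> (\<forall>v\<in>V. in_word_span Q (word v)) \<Longrightarrow> in_word_span Q (word_comb V \<mu>)"
  unfolding word_comb_def by (intro in_word_span_sum) (auto intro: in_word_span_scale)

lemma in_word_span_trans: "in_word_span P f \<Longrightarrow> (\<forall>v\<in>P. in_word_span Q (word v)) \<Longrightarrow> in_word_span Q f"
proof -
  assume "in_word_span P f" and h: "\<forall>v\<in>P. in_word_span Q (word v)"
  then obtain V \<mu> where 1: "finite V" "V \<subseteq> P" "omega_eq f (word_comb V \<mu>)" unfolding in_word_span_def by blast
  have "in_word_span Q (word_comb V \<mu>)" using 1 h by (intro in_word_span_word_comb) auto
  then show ?thesis using in_word_span_omega_eq[OF 1(3)] by blast
qed

lemma omega_eq_fmul_word_comb_left: "finite V \<Longrightarrow> omega_eq f g \<Longrightarrow> omega_eq (fmul (word_comb V \<mu>) f) (fmul (word_comb V \<mu>) g)"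
  unfolding word_comb_def fmul_sum_left
  by (intro omega_eq_sum) (auto intro: omega_eq_scale omega_eq_fmul_word_left)

lemma fmul_comb_comb: "fmul (word_comb V \<mu>) (word_comb U \<nu>) = (\<lambda>w. \<Sum>v\<in>V. \<mu> v * (\<Sum>u\<in>U. \<nu> u * word (v @ u) w))"
  unfolding word_comb_def fmul_sum_left fmul_sum_right fmul_word_word ..

lemma in_word_span_append: "in_word_span P (word u) \<Longrightarrow> in_word_span Q (word w) \<Longrightarrow>
    in_word_span {v1 @ v2 | v1 v2. v1 \<in> P \<and> v2 \<in> Q} (word (u @ w))"
proof -
  assume "in_word_span P (word u)" "in_word_span Q (word w)"
  then obtain V \<mu> U \<nu> where 1: "finite V" "V \<subseteq> P" "omega_eq (word u) (word_comb V \<mu>)"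
    and 2: "finite U" "U \<subseteq> Q" "omega_eq (word w) (word_comb U \<nu>)" unfolding in_word_span_def by blast
  have e1: "omega_eq (word (u @ w)) (fmul (word_comb V \<mu>) (word w))"
    using omega_eq_fmul_word_right[OF 1(3), of w] by (simp add: fmul_word_word)
  have e2: "omega_eq (fmul (word_comb V \<mu>) (word w)) (fmul (word_comb V \<mu>) (word_comb U \<nu>))"
    by (rule omega_eq_fmul_word_comb_left[OF 1(1) 2(3)])
  have e: "omega_eq (word (u @ w)) (fmul (word_comb V \<mu>) (word_comb U \<nu>))" by (rule omega_eq_trans[OF e1 e2])
  have "in_word_span {v1 @ v2 | v1 v2. v1 \<in> P \<and> v2 \<in> Q} (fmul (word_comb V \<mu>) (word_comb U \<nu>))"
    unfolding fmul_comb_comb using 1 2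
    by (intro in_word_span_sum ballI in_word_span_scale in_word_span_word) auto
  then show ?thesis by (rule in_word_span_omega_eq[OF e])
qed

lemma in_word_span_lists:
  "(\<forall>x\<in>set w. in_word_span {[y] | y. y \<in> Y} (word [x])) \<Longrightarrow> in_word_span {v. set v \<subseteq> Y \<and> length v = length w} (word w)"
proof (induction w)
  case Nil
  show ?case by (rule in_word_span_word) simp
next
  case (Cons x w)
  have a: "in_word_span {[y] | y. y \<in> Y} (word [x])" using Cons.prems by simp
  have b: "in_word_span {v. set v \<subseteq> Y \<and> length v = length w} (word w)" using Cons by simp
  from in_word_span_append[OF a b] have "in_word_span {v1 @ v2 | v1 v2. v1 \<in> {[y] | y. y \<in> Y} \<and> v2 \<in> {v. set v \<subseteq> Y \<and> length v = length w}}
      (word ([x] @ w))" .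
  then have "in_word_span {v1 @ v2 | v1 v2. v1 \<in> {[y] | y. y \<in> Y} \<and> v2 \<in> {v. set v \<subseteq> Y \<and> length v = length w}}
      (word (x # w))" by simp
  moreover have "{v1 @ v2 | v1 v2. v1 \<in> {[y] | y. y \<in> Y} \<and> v2 \<in> {v. set v \<subseteq> Y \<and> length v = length w}}
     \<subseteq> {v. set v \<subseteq> Y \<and> length v = length (x # w)}" by auto
  ultimately show ?case using in_word_span_mono by blast
qed

definition sorted_lists :: "nat set \<Rightarrow> nat \<Rightarrow> nat list set" where
  "sorted_lists J n = {L. sorted_wrt (<) L \<and> set L \<subseteq> J \<and> length L = n}"

lemma list_preimage: "set v \<subseteq> c ` J \<Longrightarrow> \<exists>N. v = map c N \<and> set N \<subseteq> J"
proof (induction v)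
  case Nil then show ?case by simp
next
  case (Cons y v)
  then obtain N where "v = map c N" "set N \<subseteq> J" by auto
  moreover obtain j where "j \<in> J" "y = c j" using Cons.prems by auto
  ultimately show ?case by (intro exI[of _ "j # N"]) auto
qed

lemma in_word_span_sorted:
  fixes c :: "nat \<Rightarrow> 'a::field"
  shows "in_word_span {v. set v \<subseteq> c ` J \<and> length v = n} f \<Longrightarrow> in_word_span (map c ` sorted_lists J n) f"
proof (erule in_word_span_trans, intro ballI)
  fix v assume "v \<in> {v. set v \<subseteq> c ` J \<and> length v = n}"
  then have v: "set v \<subseteq> c ` J" "length v = n" by auto
  then obtain N where N: "v = map c N" "set N \<subseteq> J" using list_preimage by blast
  show "in_word_span (map c ` sorted_lists J n) (word v)"
  proof (cases "distinct N")
    case True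
    from omega_eq_sort[OF True, of c] obtain \<sigma> where
      e: "omega_eq (word (map c N)) (\<lambda>w. \<sigma> * word (map c (sort N)) w)" by auto
    have "sort N \<in> sorted_lists J n" unfolding sorted_lists_def using True N v by (auto simp: strict_sorted_iff)
    then have "in_word_span (map c ` sorted_lists J n) (\<lambda>w. \<sigma> * word (map c (sort N)) w)"
      by (intro in_word_span_scale in_word_span_word) auto
    then show ?thesis using in_word_span_omega_eq[OF e] N by simp
  next
    case False
    then have e: "omega_eq (word (map c N)) (\<lambda>_. 0)"
      using word_in_rels_if_not_distinct[of "map c N"] by (simp add: omega_eq_0_iff distinct_map)
    show ?thesis using in_word_span_omega_eq[OF e in_word_span_zero] N by simp
  qed
qed

lemma d_add: "omega_eq (word [a + b]) (\<lambda>w. word [a] w + word [b] w)"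
  using omega_eq_d_add_ctxt[of "[]" a b "[]"] by simp

lemma d_mult: "omega_eq (word [a * b]) (\<lambda>w. a * word [b] w + b * word [a] w)"
  using omega_eq_d_mult_ctxt[of "[]" a b "[]"] by simp

lemma d_one: "word [1::'a::field] \<in> rels"
proof -
  have "(\<lambda>w. word [1 * 1] w - 1 * word [1::'a] w - 1 * word [1] w) \<in> rels"
    using rels_d_mult_ctxt[of "[]" 1 1 "[]"] by simp
  then have "(\<lambda>w. (-1) * (word [1 * 1] w - 1 * word [1::'a] w - 1 * word [1] w)) \<in> rels"
    by (rule rels.smul)
  then show ?thesis by simp
qed

lemma d_zero: "word [0::'a::field] \<in> rels"
proof -
  have "(\<lambda>w. word [0 + 0] w - word [0::'a] w - word [0] w) \<in> rels"
    using rels_d_add_ctxt[of "[]" 0 0 "[]"] by simp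
  then have "(\<lambda>w. (-1) * (word [0 + 0] w - word [0::'a] w - word [0] w)) \<in> rels"
    by (rule rels.smul)
  then show ?thesis by simp
qed

lemma d_neg: "omega_eq (word [- a]) (\<lambda>w. (-1) * word [a::'a::field] w)"
proof -
  have r: "(\<lambda>w. word [a + - a] w - word [a] w - word [- a] w) \<in> rels"
    using rels_d_add_ctxt[of "[]" a "-a" "[]"] by simp
  have "(\<lambda>w. word [0] w - (word [a + - a] w - word [a] w - word [- a] w)) \<in> rels"
    by (rule rels_diff[OF d_zero r])
  moreover have "(\<lambda>w. word [0] w - (word [a + - a] w - word [a] w - word [- a] w))
      = (\<lambda>w. word [- a] w - (-1) * word [a::'a] w)" by (rule ext) simp
  ultimately show ?thesis unfolding omega_eq_def by simp
qed

lemma d_pow: "omega_eq (word [a ^ n]) (\<lambda>w. (of_nat n * a ^ (n - 1)) * word [a::'a::field] w)"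
proof (induction n)
  case 0
  show ?case using d_one by (simp add: omega_eq_0_iff)
next
  case (Suc n)
  have e1: "omega_eq (word [a ^ Suc n]) (\<lambda>w. a * word [a ^ n] w + a ^ n * word [a] w)"
    using d_mult[of a "a ^ n"] by simp
  have e2: "omega_eq (\<lambda>w. a * word [a ^ n] w + a ^ n * word [a] w)
      (\<lambda>w. a * ((of_nat n * a ^ (n - 1)) * word [a] w) + a ^ n * word [a] w)"
    by (intro omega_eq_add omega_eq_scale Suc.IH omega_eq_refl)
  have e3: "(\<lambda>w. a * ((of_nat n * a ^ (n - 1)) * word [a] w) + a ^ n * word [a] w)
      = (\<lambda>w. (of_nat (Suc n) * a ^ (Suc n - 1)) * word [a] w)"
  proof (rule ext)
    fix w
    show "a * ((of_nat n * a ^ (n - 1)) * word [a] w) + a ^ n * word [a] w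
        = (of_nat (Suc n) * a ^ (Suc n - 1)) * word [a] w"
      by (cases n) (simp_all add: algebra_simps)
  qed
  show ?case using omega_eq_trans[OF e1 e2] unfolding e3 .
qed

lemma d_inv: "a \<noteq> 0 \<Longrightarrow> omega_eq (word [inverse a]) (\<lambda>w. (- (inverse a ^ 2)) * word [a::'a::field] w)"
proof -
  assume a: "a \<noteq> 0"
  have r: "(\<lambda>w. word [a * inverse a] w - a * word [inverse a] w - inverse a * word [a] w) \<in> rels"
    using rels_d_mult_ctxt[of "[]" a "inverse a" "[]"] by simp
  have "(\<lambda>w. word [1] w - (word [a * inverse a] w - a * word [inverse a] w - inverse a * word [a] w)) \<in> rels"
    by (rule rels_diff[OF d_one r])
  then have "(\<lambda>w. inverse a * (word [1] w - (word [a * inverse a] w - a * word [inverse a] w - inverse a * word [a] w))) \<in> rels"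
    by (rule rels.smul)
  moreover have "(\<lambda>w. inverse a * (word [1] w - (word [a * inverse a] w - a * word [inverse a] w - inverse a * word [a] w)))
     = (\<lambda>w. word [inverse a] w - (- (inverse a ^ 2)) * word [a] w)"
    using a by (intro ext) (simp add: algebra_simps power2_eq_square)
  ultimately show ?thesis unfolding omega_eq_def by simp
qed

definition singleton_words :: "'a set \<Rightarrow> 'a list set" where "singleton_words Y = {[v] | v. v \<in> Y}"

context char_p begin

lemma Fp_adj_d_in_span:
  fixes Y :: "'a set"
  shows "Fp_adj Y \<subseteq> {y. in_word_span (singleton_words Y) (word [y])}"
proof (rule Fp_adj_least)
  let ?E = "{y. in_word_span (singleton_words Y) (word [y])}"
  have neg: "in_word_span (singleton_words Y) (word [- y])" if "in_word_span (singleton_words Y) (word [y])" for y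
    using in_word_span_omega_eq[OF d_neg in_word_span_scale[OF that]] .
  show "subfield ?E"
    unfolding subfield_def
  proof (intro conjI ballI)
    show "0 \<in> ?E" using in_word_span_omega_eq[OF _ in_word_span_zero] d_zero by (simp add: omega_eq_0_iff)
    show "1 \<in> ?E" using in_word_span_omega_eq[OF _ in_word_span_zero] d_one by (simp add: omega_eq_0_iff)
    fix y z assume y: "y \<in> ?E" and z: "z \<in> ?E"
    then have y': "in_word_span (singleton_words Y) (word [y])" and z': "in_word_span (singleton_words Y) (word [z])" by auto
    show "y + z \<in> ?E" using in_word_span_omega_eq[OF d_add in_word_span_add[OF y' z']] by simp
    have "in_word_span (singleton_words Y) (word [y + - z])" using in_word_span_omega_eq[OF d_add in_word_span_add[OF y' neg[OF z']]] .
    then show "y - z \<in> ?E" by simp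
    show "y * z \<in> ?E" using in_word_span_omega_eq[OF d_mult in_word_span_add[OF in_word_span_scale[OF z'] in_word_span_scale[OF y']]] by simp
  next
    fix y assume y: "y \<in> ?E"
    then have y': "in_word_span (singleton_words Y) (word [y])" by auto
    show "inverse y \<in> ?E"
    proof (cases "y = 0")
      case True then show ?thesis using y by simp
    next
      case False
      show ?thesis using in_word_span_omega_eq[OF d_inv[OF False] in_word_span_scale[OF y']] by simp
    qed
  qed
  show "Fp \<subseteq> ?E"
  proof
    fix y :: 'a assume "y \<in> Fp"
    then obtain e where e: "y = e ^ CHAR('a)" unfolding Fp_def by blast
    have "omega_eq (word [y]) (\<lambda>w. 0 * word [e] w)" using d_pow[of e "CHAR('a)"] e by simp
    then show "y \<in> ?E" using in_word_span_omega_eq[OF _ in_word_span_zero] by simp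
  qed
  show "Y \<subseteq> ?E" unfolding singleton_words_def by (auto intro: in_word_span_word)
qed

end

section \<open>Evaluating forms on derivations\<close>

lemma det_row_lin:
  fixes A B C :: "'a::comm_ring_1 mat"
  assumes A: "A \<in> carrier_mat n n" and B: "B \<in> carrier_mat n n" and C: "C \<in> carrier_mat n n"
    and k: "k < n"
    and oth: "\<And>i j. i < n \<Longrightarrow> j < n \<Longrightarrow> i \<noteq> k \<Longrightarrow> A $$ (i,j) = B $$ (i,j) \<and> C $$ (i,j) = B $$ (i,j)"
    and rowk: "\<And>j. j < n \<Longrightarrow> A $$ (k,j) = \<alpha> * B $$ (k,j) + \<beta> * C $$ (k,j)"
  shows "det A = \<alpha> * det B + \<beta> * det C"
proof -
  have "det A = (\<Sum>p\<in>{p. p permutes {0..<n}}. signof p * (\<Prod>i=0..<n. A $$ (i, p i)))"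
    by (rule det_def'[OF A])
  also have "\<dots> = (\<Sum>p\<in>{p. p permutes {0..<n}}. \<alpha> * (signof p * (\<Prod>i=0..<n. B $$ (i, p i)))
      + \<beta> * (signof p * (\<Prod>i=0..<n. C $$ (i, p i))))"
  proof (rule sum.cong[OF refl])
    fix p assume "p \<in> {p. p permutes {0..<n}}"
    then have pp: "p permutes {0..<n}" by simp
    have pn: "p i < n" if "i < n" for i using permutes_in_image[OF pp] that by simp
    have eqB: "(\<Prod>i\<in>{0..<n} - {k}. A $$ (i, p i)) = (\<Prod>i\<in>{0..<n} - {k}. B $$ (i, p i))"
      by (rule prod.cong[OF refl]) (use oth pn in auto)
    have eqC: "(\<Prod>i\<in>{0..<n} - {k}. C $$ (i, p i)) = (\<Prod>i\<in>{0..<n} - {k}. B $$ (i, p i))"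
      by (rule prod.cong[OF refl]) (use oth pn in auto)
    have kk: "k \<in> {0..<n}" using k by simp
    have "(\<Prod>i=0..<n. A $$ (i, p i)) = A $$ (k, p k) * (\<Prod>i\<in>{0..<n} - {k}. A $$ (i, p i))"
      by (rule prod.remove[OF _ kk]) simp
    moreover have "(\<Prod>i=0..<n. B $$ (i, p i)) = B $$ (k, p k) * (\<Prod>i\<in>{0..<n} - {k}. B $$ (i, p i))"
      by (rule prod.remove[OF _ kk]) simp
    moreover have "(\<Prod>i=0..<n. C $$ (i, p i)) = C $$ (k, p k) * (\<Prod>i\<in>{0..<n} - {k}. C $$ (i, p i))"
      by (rule prod.remove[OF _ kk]) simp
    moreover have "A $$ (k, p k) = \<alpha> * B $$ (k, p k) + \<beta> * C $$ (k, p k)" using rowk pn k by blast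
    ultimately show "signof p * (\<Prod>i=0..<n. A $$ (i, p i)) = \<alpha> * (signof p * (\<Prod>i=0..<n. B $$ (i, p i)))
      + \<beta> * (signof p * (\<Prod>i=0..<n. C $$ (i, p i)))"
      using eqB eqC by (simp add: algebra_simps)
  qed
  also have "\<dots> = \<alpha> * det B + \<beta> * det C"
    by (simp add: det_def'[OF B] det_def'[OF C] sum.distrib sum_distrib_left)
  finally show ?thesis .
qed

lemma det_zero_col:
  fixes A :: "'a::comm_ring_1 mat"
  assumes A: "A \<in> carrier_mat n n" and c: "c < n" and z: "\<And>i. i < n \<Longrightarrow> A $$ (i, c) = 0"
  shows "det A = 0"
proof -
  have "det A = (\<Sum>p\<in>{p. p permutes {0..<n}}. signof p * (\<Prod>i=0..<n. A $$ (i, p i)))"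
    by (rule det_def'[OF A])
  also have "\<dots> = 0"
  proof (rule sum.neutral, intro ballI)
    fix p assume "p \<in> {p. p permutes {0..<n}}"
    then have pp: "p permutes {0..<n}" by simp
    have "c \<in> p ` {0..<n}" using permutes_image[OF pp] c by simp
    then obtain r where r: "r \<in> {0..<n}" "p r = c" by blast
    have "A $$ (r, p r) = 0" using r z by simp
    then have "(\<Prod>i=0..<n. A $$ (i, p i)) = 0" using r by (intro prod_zero) auto
    then show "signof p * (\<Prod>i=0..<n. A $$ (i, p i)) = 0" by simp
  qed
  finally show ?thesis .
qed

(* eval_word D M w = det (D_(M!i) (w!j)) is the value of dw_1 \<and> ... \<and> dw_n on the derivations
   D_(M!1), ..., D_(M!n); eval_form extends it linearly. *)
definition deriv_mat :: "(nat \<Rightarrow> 'a \<Rightarrow> 'a) \<Rightarrow> nat list \<Rightarrow> 'a list \<Rightarrow> 'a::field mat" where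
  "deriv_mat D M w = mat (length M) (length M) (\<lambda>(j, i). D (M ! i) (w ! j))"

definition eval_word :: "(nat \<Rightarrow> 'a \<Rightarrow> 'a) \<Rightarrow> nat list \<Rightarrow> 'a list \<Rightarrow> 'a::field" where
  "eval_word D M w = (if length w = length M then det (deriv_mat D M w) else 0)"

definition eval_form :: "(nat \<Rightarrow> 'a \<Rightarrow> 'a) \<Rightarrow> nat list \<Rightarrow> ('a list \<Rightarrow> 'a) \<Rightarrow> 'a::field" where
  "eval_form D M f = (\<Sum>w | f w \<noteq> 0. f w * eval_word D M w)"

lemma nth_append_middle: "j \<noteq> length u \<Longrightarrow> (u @ [y] @ v) ! j = (u @ [z] @ v) ! j"
  by (cases "j < length u") (auto simp: nth_append)

lemma eval_word_linear:
  assumes D: "\<And>i. i \<in> set M \<Longrightarrow> D i y = \<alpha> * D i a + \<beta> * D i b"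
  shows "eval_word D M (u @ [y] @ v) = \<alpha> * eval_word D M (u @ [a] @ v) + \<beta> * eval_word D M (u @ [b] @ v)"
proof (cases "length (u @ [y] @ v) = length M")
  case False then show ?thesis unfolding eval_word_def by simp
next
  case True
  let ?n = "length M"
  have k: "length u < ?n" using True by simp
  have "det (deriv_mat D M (u @ [y] @ v)) = \<alpha> * det (deriv_mat D M (u @ [a] @ v)) + \<beta> * det (deriv_mat D M (u @ [b] @ v))"
  proof (rule det_row_lin[of _ ?n _ _ "length u"])
    show "deriv_mat D M (u @ [y] @ v) \<in> carrier_mat ?n ?n" "deriv_mat D M (u @ [a] @ v) \<in> carrier_mat ?n ?n"
      "deriv_mat D M (u @ [b] @ v) \<in> carrier_mat ?n ?n" unfolding deriv_mat_def by simp_all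
    show "length u < ?n" by (rule k)
    fix i j assume ij: "i < ?n" "j < ?n" and ik: "i \<noteq> length u"
    have e1: "(u @ [y] @ v) ! i = (u @ [a] @ v) ! i" by (rule nth_append_middle[OF ik])
    have e2: "(u @ [b] @ v) ! i = (u @ [a] @ v) ! i" by (rule nth_append_middle[OF ik])
    show "deriv_mat D M (u @ [y] @ v) $$ (i, j) = deriv_mat D M (u @ [a] @ v) $$ (i, j) \<and>
        deriv_mat D M (u @ [b] @ v) $$ (i, j) = deriv_mat D M (u @ [a] @ v) $$ (i, j)"
      unfolding deriv_mat_def using ij e1 e2 by simp
  next
    fix j assume j: "j < ?n"
    then show "deriv_mat D M (u @ [y] @ v) $$ (length u, j) = \<alpha> * deriv_mat D M (u @ [a] @ v) $$ (length u, j) + \<beta> * deriv_mat D M (u @ [b] @ v) $$ (length u, j)"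
      unfolding deriv_mat_def using k D[of "M ! j"] by (simp add: nth_append)
  qed
  then show ?thesis unfolding eval_word_def using True by simp
qed

lemma eval_word_square: "eval_word D M (u @ [a, a] @ v) = 0"
proof (cases "length (u @ [a, a] @ v) = length M")
  case False then show ?thesis unfolding eval_word_def by simp
next
  case True
  let ?n = "length M"
  have "det (deriv_mat D M (u @ [a, a] @ v)) = 0"
  proof (rule det_identical_rows[of _ ?n "length u" "Suc (length u)"])
    show "deriv_mat D M (u @ [a, a] @ v) \<in> carrier_mat ?n ?n" unfolding deriv_mat_def by simp
    show "length u \<noteq> Suc (length u)" by simp
    show "length u < ?n" "Suc (length u) < ?n" using True by simp_all
    show "row (deriv_mat D M (u @ [a, a] @ v)) (length u) = row (deriv_mat D M (u @ [a, a] @ v)) (Suc (length u))"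
      unfolding deriv_mat_def using True by (simp add: nth_append)
  qed
  then show ?thesis unfolding eval_word_def by simp
qed

lemma eval_form_superset: "finite W \<Longrightarrow> {w. f w \<noteq> 0} \<subseteq> W \<Longrightarrow> eval_form D M f = (\<Sum>w\<in>W. f w * eval_word D M w)"
  unfolding eval_form_def by (rule sum.mono_neutral_left) auto

lemma support_sum_words: "{w. (\<Sum>i\<in>I. c i * word (x i) w) \<noteq> 0} \<subseteq> x ` I"
proof
  fix w assume "w \<in> {w. (\<Sum>i\<in>I. c i * word (x i) w) \<noteq> 0}"
  then obtain i where "i \<in> I" "c i * word (x i) w \<noteq> 0" by (metis (mono_tags, lifting) mem_Collect_eq sum.neutral)
  then show "w \<in> x ` I" unfolding word_def by (auto split: if_splits)
qed

lemma eval_form_sum_words: "finite I \<Longrightarrow> eval_form D M (\<lambda>w. \<Sum>i\<in>I. c i * word (x i) w) = (\<Sum>i\<in>I. c i * eval_word D M (x i))"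
proof -
  assume I: "finite I"
  have "eval_form D M (\<lambda>w. \<Sum>i\<in>I. c i * word (x i) w) = (\<Sum>w\<in>x ` I. (\<Sum>i\<in>I. c i * word (x i) w) * eval_word D M w)"
    by (rule eval_form_superset[OF finite_imageI[OF I] support_sum_words])
  also have "\<dots> = (\<Sum>w\<in>x ` I. \<Sum>i\<in>I. c i * word (x i) w * eval_word D M w)"
    by (simp add: sum_distrib_right)
  also have "\<dots> = (\<Sum>i\<in>I. \<Sum>w\<in>x ` I. c i * word (x i) w * eval_word D M w)"
    by (rule sum.swap)
  also have "\<dots> = (\<Sum>i\<in>I. c i * eval_word D M (x i))"
  proof (rule sum.cong[OF refl])
    fix i assume i: "i \<in> I"
    have "(\<Sum>w\<in>x ` I. c i * word (x i) w * eval_word D M w) = (\<Sum>w\<in>x ` I. if w = x i then c i * eval_word D M w else 0)"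
      by (rule sum.cong) (auto simp: word_def)
    also have "\<dots> = c i * eval_word D M (x i)" using I i by (simp add: sum.delta')
    finally show "(\<Sum>w\<in>x ` I. c i * word (x i) w * eval_word D M w) = c i * eval_word D M (x i)" .
  qed
  finally show ?thesis .
qed

lemma eval_form_word: "eval_form D M (word x) = eval_word D M x"
  using eval_form_sum_words[of "{0::nat}" D M "\<lambda>_. 1" "\<lambda>_. x"] by simp

lemma eval_form_three_words:
  assumes F: "F = (\<lambda>w. word A w - \<alpha> * word B w - \<beta> * word C w)"
  shows "eval_form D M F = eval_word D M A - \<alpha> * eval_word D M B - \<beta> * eval_word D M C \<and> finite {w. F w \<noteq> 0}"
proof -
  define cc where "cc i = (if i = 0 then 1 else if i = 1 then - \<alpha> else - \<beta>)" for i :: nat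
  define xx where "xx i = (if i = 0 then A else if i = 1 then B else C)" for i :: nat
  have e: "F = (\<lambda>w. \<Sum>i\<in>{0, 1, 2}. cc i * word (xx i) w)"
    unfolding F cc_def xx_def by (rule ext) simp
  have p1: "eval_form D M (\<lambda>w. \<Sum>i\<in>{0, 1, 2}. cc i * word (xx i) w) = (\<Sum>i\<in>{0, 1, 2}. cc i * eval_word D M (xx i))"
    by (rule eval_form_sum_words) simp
  have p2: "(\<Sum>i\<in>{0::nat, 1, 2}. cc i * eval_word D M (xx i)) = eval_word D M A - \<alpha> * eval_word D M B - \<beta> * eval_word D M C"
    unfolding cc_def xx_def by simp
  have f: "finite {w. (\<Sum>i\<in>{0::nat, 1, 2}. cc i * word (xx i) w) \<noteq> 0}"
    using support_sum_words[of cc xx "{0::nat, 1, 2}"] by (rule finite_subset) simp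
  show ?thesis unfolding e using trans[OF p1 p2] f by blast
qed

lemma finite_support_word: "finite {w. word A w \<noteq> (0::'a::field)}"
  unfolding word_def by simp

lemma eval_form_rels:
  assumes D: "\<forall>i\<in>set M. derivation_on UNIV (D i)"
  shows "f \<in> rels \<Longrightarrow> finite {w. f w \<noteq> 0} \<and> eval_form D M f = 0"
proof (induction rule: rels.induct)
  case zero then show ?case unfolding eval_form_def by simp
next
  case (add f g)
  let ?W = "{w. f w \<noteq> 0} \<union> {w. g w \<noteq> 0}"
  have fin: "finite ?W" using add by simp
  have s: "{w. f w + g w \<noteq> 0} \<subseteq> ?W" by auto
  have "eval_form D M (\<lambda>w. f w + g w) = (\<Sum>w\<in>?W. (f w + g w) * eval_word D M w)" by (rule eval_form_superset[OF fin]) (use s in auto)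
  also have "\<dots> = (\<Sum>w\<in>?W. f w * eval_word D M w) + (\<Sum>w\<in>?W. g w * eval_word D M w)"
    by (simp add: distrib_right sum.distrib)
  also have "\<dots> = eval_form D M f + eval_form D M g"
    using eval_form_superset[OF fin, of f D M] eval_form_superset[OF fin, of g D M] by auto
  finally show ?case using add fin s finite_subset by auto
next
  case (smul f c)
  let ?W = "{w. f w \<noteq> 0}"
  have fin: "finite ?W" using smul by simp
  have s: "{w. c * f w \<noteq> 0} \<subseteq> ?W" by auto
  have "eval_form D M (\<lambda>w. c * f w) = (\<Sum>w\<in>?W. (c * f w) * eval_word D M w)" by (rule eval_form_superset[OF fin]) (use s in auto)
  also have "\<dots> = c * eval_form D M f"
    using eval_form_superset[OF fin, of f D M] by (simp add: sum_distrib_left mult.assoc)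
  finally show ?case using smul fin s finite_subset by auto
next
  case (gen g u v)
  have dadd: "D i (a + b) = 1 * D i a + 1 * D i b" and dmul: "D i (a * b) = a * D i b + b * D i a"
    if "i \<in> set M" for i a b using D that unfolding derivation_on_def by auto
  from gen consider (A) a b where "g = (\<lambda>w. word [a + b] w - word [a] w - word [b] w)"
    | (B) a b where "g = (\<lambda>w. word [a * b] w - a * word [b] w - b * word [a] w)"
    | (C) a where "g = word [a, a]" unfolding gens_def by blast
  then show ?case
  proof cases
    case A
    have Fe: "fmul (word u) (fmul g (word v)) = (\<lambda>w. word (u @ [a + b] @ v) w - 1 * word (u @ [a] @ v) w - 1 * word (u @ [b] @ v) w)"
      unfolding A by (simp add: fmul_diff_left fmul_diff_right fmul_word_word)
    have De: "eval_word D M (u @ [a + b] @ v) = 1 * eval_word D M (u @ [a] @ v) + 1 * eval_word D M (u @ [b] @ v)"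
      by (rule eval_word_linear) (rule dadd)
    note P = eval_form_three_words[OF Fe, of D M]
    show ?thesis
    proof
      show "finite {w. fmul (word u) (fmul g (word v)) w \<noteq> 0}" using P by blast
      show "eval_form D M (fmul (word u) (fmul g (word v))) = 0" using P De by simp
    qed
  next
    case B
    have Fe: "fmul (word u) (fmul g (word v)) = (\<lambda>w. word (u @ [a * b] @ v) w - a * word (u @ [b] @ v) w - b * word (u @ [a] @ v) w)"
      unfolding B by (simp add: fmul_diff_left fmul_diff_right fmul_word_word fmul_scale_left fmul_scale_right)
    have De: "eval_word D M (u @ [a * b] @ v) = a * eval_word D M (u @ [b] @ v) + b * eval_word D M (u @ [a] @ v)"
      by (rule eval_word_linear) (rule dmul)
    note P = eval_form_three_words[OF Fe, of D M]
    show ?thesis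
    proof
      show "finite {w. fmul (word u) (fmul g (word v)) w \<noteq> 0}" using P by blast
      show "eval_form D M (fmul (word u) (fmul g (word v))) = 0" using P De by simp
    qed
  next
    case C
    have Fe: "fmul (word u) (fmul g (word v)) = word (u @ [a, a] @ v)"
      unfolding C by (simp add: fmul_word_word)
    show ?thesis unfolding Fe using eval_form_word[of D M "u @ [a, a] @ v"] eval_word_square[of D M u a v] finite_support_word[of "u @ [a, a] @ v"]
      by simp
  qed
qed

lemma eval_form_diff:
  assumes "finite {w. f w \<noteq> 0}" "finite {w. g w \<noteq> 0}"
  shows "eval_form D M (\<lambda>w. f w - g w) = eval_form D M f - eval_form D M g"
proof -
  let ?W = "{w. f w \<noteq> 0} \<union> {w. g w \<noteq> 0}"
  have fin: "finite ?W" using assms by simp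
  have "eval_form D M (\<lambda>w. f w - g w) = (\<Sum>w\<in>?W. (f w - g w) * eval_word D M w)" by (rule eval_form_superset[OF fin]) auto
  also have "\<dots> = (\<Sum>w\<in>?W. f w * eval_word D M w) - (\<Sum>w\<in>?W. g w * eval_word D M w)"
    by (simp add: left_diff_distrib sum_subtractf)
  also have "\<dots> = eval_form D M f - eval_form D M g"
    using eval_form_superset[OF fin, of f D M] eval_form_superset[OF fin, of g D M] by auto
  finally show ?thesis .
qed

lemma eval_form_omega_eq:
  assumes D: "\<forall>i\<in>set M. derivation_on UNIV (D i)"
    and e: "omega_eq f g" and fs: "finite {w. f w \<noteq> 0}" "finite {w. g w \<noteq> 0}"
  shows "eval_form D M f = eval_form D M g"
  using eval_form_rels[OF D, of "\<lambda>w. f w - g w"] e eval_form_diff[OF fs, of D M] unfolding omega_eq_def by simp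

lemma eval_form_scaled_word: "eval_form D M (\<lambda>w. \<sigma> * word x w) = \<sigma> * eval_word D M x"
  using eval_form_sum_words[of "{0::nat}" D M "\<lambda>_. \<sigma>" "\<lambda>_. x"] by simp

lemma finite_sorted_lists: "finite J \<Longrightarrow> finite (sorted_lists J n)"
proof -
  assume J: "finite J"
  have "sorted_lists J n \<subseteq> {L. set L \<subseteq> J \<and> length L = n}" unfolding sorted_lists_def by auto
  moreover have "finite {L. set L \<subseteq> J \<and> length L = n}" using finite_lists_length_eq[OF J] .
  ultimately show ?thesis by (rule finite_subset)
qed

locale dual_derivations =
  fixes D :: "nat \<Rightarrow> 'a::field \<Rightarrow> 'a" and c :: "nat \<Rightarrow> 'a" and J :: "nat set"
  assumes hD: "\<forall>i\<in>J. derivation_on UNIV (D i)"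
    and hDc: "\<forall>i\<in>J. \<forall>j\<in>J. D i (c j) = (if i = j then 1 else 0)"
begin

lemma eval_word_diagonal: "distinct M \<Longrightarrow> set M \<subseteq> J \<Longrightarrow> eval_word D M (map c M) = 1"
proof -
  assume dM: "distinct M" and MJ: "set M \<subseteq> J"
  have "deriv_mat D M (map c M) = 1\<^sub>m (length M)"
  proof (rule eq_matI)
    fix j i assume j: "j < dim_row (1\<^sub>m (length M))" and i: "i < dim_col (1\<^sub>m (length M))"
    have "M ! i \<in> J" "M ! j \<in> J" using i j MJ by auto
    moreover have "(M ! i = M ! j) = (i = j)" using dM i j by (simp add: nth_eq_iff_index_eq)
    ultimately show "deriv_mat D M (map c M) $$ (j, i) = 1\<^sub>m (length M) $$ (j, i)"
      unfolding deriv_mat_def using i j hDc by auto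
  qed (simp_all add: deriv_mat_def)
  then show ?thesis unfolding eval_word_def by simp
qed

lemma eval_word_missing_index:
  assumes NJ: "set N \<subseteq> J" and MJ: "set M \<subseteq> J" and len: "length N = length M"
    and i: "i < length M" and Mi: "M ! i \<notin> set N"
  shows "eval_word D M (map c N) = 0"
proof -
  have "det (deriv_mat D M (map c N)) = 0"
  proof (rule det_zero_col[of _ "length M" i])
    show "deriv_mat D M (map c N) \<in> carrier_mat (length M) (length M)" unfolding deriv_mat_def by simp
    show "i < length M" by (rule i)
    fix r assume r: "r < length M"
    have "N ! r \<in> set N" using r len by simp
    then have "N ! r \<noteq> M ! i" "N ! r \<in> J" "M ! i \<in> J" using Mi NJ MJ i by auto
    then show "deriv_mat D M (map c N) $$ (r, i) = 0" unfolding deriv_mat_def using r i len hDc by auto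
  qed
  then show ?thesis unfolding eval_word_def by simp
qed

lemma derivations_on_list: "set M \<subseteq> J \<Longrightarrow> \<forall>i\<in>set M. derivation_on UNIV (D i)"
  using hD by blast

lemma eval_word_not_distinct: "set M \<subseteq> J \<Longrightarrow> \<not> distinct N \<Longrightarrow> eval_word D M (map c N) = 0"
proof -
  assume MJ: "set M \<subseteq> J" and nd: "\<not> distinct N"
  from nd have e: "omega_eq (word (map c N)) (\<lambda>_. 0)"
    using word_in_rels_if_not_distinct[of "map c N"] by (simp add: omega_eq_0_iff distinct_map)
  have "eval_form D M (word (map c N)) = eval_form D M (\<lambda>_. 0)"
    by (rule eval_form_omega_eq[OF derivations_on_list[OF MJ] e finite_support_word]) simp
  then show ?thesis unfolding eval_form_word by (simp add: eval_form_def)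
qed

lemma eval_word_sort_neq_0:
  assumes MJ: "set M \<subseteq> J" and dN: "distinct N" and NJ: "set N \<subseteq> J" and sN: "sort N = M"
  shows "eval_word D M (map c N) \<noteq> 0"
proof -
  from omega_eq_sort[OF dN, of c] obtain \<sigma> where s: "\<sigma> = 1 \<or> \<sigma> = -1"
    and e: "omega_eq (word (map c N)) (\<lambda>w. \<sigma> * word (map c (sort N)) w)" by auto
  have fs: "finite {w. \<sigma> * word (map c (sort N)) w \<noteq> 0}"
    using finite_support_word[of "map c (sort N)"] by (rule finite_subset[rotated]) auto
  have "eval_form D M (word (map c N)) = eval_form D M (\<lambda>w. \<sigma> * word (map c (sort N)) w)"
    by (rule eval_form_omega_eq[OF derivations_on_list[OF MJ] e finite_support_word fs])
  moreover have "distinct M" using dN sN by (metis distinct_sort)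
  ultimately have "eval_word D M (map c N) = \<sigma>"
    unfolding eval_form_word eval_form_scaled_word sN using eval_word_diagonal MJ by simp
  then show ?thesis using s by auto
qed

lemma eval_word_other_sorted:
  assumes L0: "L0 \<in> sorted_lists J n" and L: "L \<in> sorted_lists J n" "L \<noteq> L0"
    and KL: "sorted_wrt (<) KL" "set KL \<subseteq> J" and disj: "set KL \<inter> set L0 = {}"
  shows "eval_word D (sort (L0 @ KL)) (map c (L @ KL)) = 0"
proof -
  define M where "M = sort (L0 @ KL)"
  have L0p: "sorted_wrt (<) L0" "set L0 \<subseteq> J" "length L0 = n" using L0 unfolding sorted_lists_def by auto
  have Lp: "sorted_wrt (<) L" "set L \<subseteq> J" "length L = n" using L unfolding sorted_lists_def by auto
  have MJ: "set M \<subseteq> J" unfolding M_def using L0p KL by auto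
  show ?thesis
  proof (cases "distinct (L @ KL)")
    case False
    then show ?thesis using eval_word_not_distinct[OF MJ] unfolding M_def by blast
  next
    case True
    have "\<not> set M \<subseteq> set (L @ KL)"
    proof
      assume sub: "set M \<subseteq> set (L @ KL)"
      have "distinct (L0 @ KL)" using L0p(1) KL(1) disj by (auto simp: strict_sorted_iff)
      then have "card (set M) = length (L0 @ KL)" unfolding M_def set_sort by (rule distinct_card)
      also have "\<dots> = length (L @ KL)" using Lp(3) L0p(3) by simp
      also have "\<dots> = card (set (L @ KL))" by (rule distinct_card[OF True, symmetric])
      finally have "set M = set (L @ KL)" using sub by (intro card_subset_eq) auto
      then have "set L0 \<union> set KL = set L \<union> set KL" unfolding M_def by simp
      moreover have "set L \<inter> set KL = {}" using True by auto
      ultimately have "set L = set L0" using disj by blast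
      then have "L = L0" using Lp(1) L0p(1)
        by (intro sorted_distinct_set_unique) (auto simp: strict_sorted_iff)
      then show False using L(2) by simp
    qed
    then obtain x where x: "x \<in> set M" "x \<notin> set (L @ KL)" by blast
    then obtain i where i: "i < length M" "M ! i = x" by (metis in_set_conv_nth)
    have "length (L @ KL) = length M" unfolding M_def using Lp L0p by simp
    then show ?thesis using eval_word_missing_index[of "L @ KL" M i] Lp KL MJ i x unfolding M_def by auto
  qed
qed

(* Evaluating \<omega> \<and> dc_KL on the derivations dual to L0 @ KL isolates the coefficient of L0. *)
lemma sorted_coeff_eq_0_if_annihilates:
  assumes Jf: "finite J"
    and om: "omega_eq \<omega> (\<lambda>w. \<Sum>L\<in>sorted_lists J n. \<mu> L * word (map c L) w)"
    and KL: "sorted_wrt (<) KL" "set KL \<subseteq> J" and L0: "L0 \<in> sorted_lists J n" and disj: "set KL \<inter> set L0 = {}"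
    and ann: "omega_eq (fmul \<omega> (word (map c KL))) (\<lambda>_. 0)"
  shows "\<mu> L0 = 0"
proof -
  have finSL: "finite (sorted_lists J n)" by (rule finite_sorted_lists[OF Jf])
  define F where "F = (\<lambda>w. \<Sum>L\<in>sorted_lists J n. \<mu> L * word (map c L @ map c KL) w)"
  have Fe: "fmul (\<lambda>w. \<Sum>L\<in>sorted_lists J n. \<mu> L * word (map c L) w) (word (map c KL)) = F"
    unfolding F_def fmul_sum_left fmul_word_word ..
  have e1: "omega_eq (fmul \<omega> (word (map c KL))) F"
    using omega_eq_fmul_word_right[OF om, of "map c KL"] unfolding Fe .
  have F0: "omega_eq F (\<lambda>_. 0)" by (rule omega_eq_trans[OF omega_eq_sym[OF e1] ann])
  define M where "M = sort (L0 @ KL)"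
  have L0p: "sorted_wrt (<) L0" "set L0 \<subseteq> J" "length L0 = n" using L0 unfolding sorted_lists_def by auto
  have MJ: "set M \<subseteq> J" unfolding M_def using L0p KL by auto
  have dKL: "distinct KL" using KL(1) by (simp add: strict_sorted_iff)
  have dL0: "distinct L0" using L0p(1) by (simp add: strict_sorted_iff)
  have finF: "finite {w. F w \<noteq> 0}" unfolding F_def
    using support_sum_words[of \<mu> "\<lambda>L. map c L @ map c KL" "sorted_lists J n"] finite_imageI[OF finSL, of "\<lambda>L. map c L @ map c KL"]
    by (rule finite_subset)
  have "eval_form D M F = eval_form D M (\<lambda>_. 0)"
    by (rule eval_form_omega_eq[OF derivations_on_list[OF MJ] F0 finF]) simp
  then have phi0: "eval_form D M F = 0" by (simp add: eval_form_def)
  have phiF: "eval_form D M F = (\<Sum>L\<in>sorted_lists J n. \<mu> L * eval_word D M (map c L @ map c KL))"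
    unfolding F_def by (rule eval_form_sum_words[OF finSL])
  have other: "eval_word D M (map c L @ map c KL) = 0" if "L \<in> sorted_lists J n" "L \<noteq> L0" for L
    using eval_word_other_sorted[OF L0 that KL disj] unfolding M_def by simp
  have self: "eval_word D M (map c L0 @ map c KL) \<noteq> 0"
    using eval_word_sort_neq_0[OF MJ, of "L0 @ KL"] dL0 dKL disj L0p KL unfolding M_def by auto
  have "(\<Sum>L\<in>sorted_lists J n. \<mu> L * eval_word D M (map c L @ map c KL)) = \<mu> L0 * eval_word D M (map c L0 @ map c KL)"
    using other L0 finSL by (subst sum.remove[OF finSL L0]) (auto intro!: sum.neutral)
  then have "\<mu> L0 * eval_word D M (map c L0 @ map c KL) = 0" using phi0 phiF by simp
  then show ?thesis using self by simp
qed

end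

lemma Om_finite_support: "f \<in> Om m \<Longrightarrow> finite {w. f w \<noteq> 0}"
  unfolding Om_def by (auto split: if_splits)

lemma word_comb_support_self: "finite {w. f w \<noteq> 0} \<Longrightarrow> word_comb {w. f w \<noteq> 0} f = f"
proof (rule ext)
  fix x assume fin: "finite {w. f w \<noteq> 0}"
  have "word_comb {w. f w \<noteq> 0} f x = (\<Sum>v\<in>{w. f w \<noteq> 0}. if v = x then f v else 0)"
    unfolding word_comb_def word_def by (rule sum.cong) auto
  also have "\<dots> = f x" using fin by (simp add: sum.delta')
  finally show "word_comb {w. f w \<noteq> 0} f x = f x" .
qed

lemma omega_eq_fmul_0_right:
  assumes fin: "finite {w. \<omega> w \<noteq> 0}" and u: "omega_eq u (\<lambda>_. 0)"
  shows "omega_eq (fmul \<omega> u) (\<lambda>_. 0)"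
proof -
  have "omega_eq (fmul (word_comb {w. \<omega> w \<noteq> 0} \<omega>) u) (fmul (word_comb {w. \<omega> w \<noteq> 0} \<omega>) (\<lambda>_. 0))"
    by (rule omega_eq_fmul_word_comb_left[OF fin u])
  then show ?thesis unfolding word_comb_support_self[OF fin] fmul_zero_right .
qed

lemma fmul_sum_left_unscaled: "fmul (\<lambda>w. \<Sum>i\<in>I. f i w) g = (\<lambda>w. \<Sum>i\<in>I. fmul (f i) g w)"
  using fmul_sum_left[of "\<lambda>_. 1" f I g] by simp

definition in_sorted_span :: "(nat \<Rightarrow> 'a) \<Rightarrow> nat set \<Rightarrow> nat \<Rightarrow> ('a list \<Rightarrow> 'a::field) \<Rightarrow> bool" where
  "in_sorted_span c J n f \<longleftrightarrow> (\<exists>\<mu>. omega_eq f (\<lambda>w. \<Sum>L\<in>sorted_lists J n. \<mu> L * word (map c L) w))"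

lemma in_sorted_span_zero: "in_sorted_span c J n (\<lambda>_. 0)"
  unfolding in_sorted_span_def by (intro exI[of _ "\<lambda>_. 0"]) (simp add: omega_eq_refl)

lemma in_sorted_span_add: "in_sorted_span c J n f \<Longrightarrow> in_sorted_span c J n g \<Longrightarrow> in_sorted_span c J n (\<lambda>w. f w + g w)"
proof -
  assume "in_sorted_span c J n f" "in_sorted_span c J n g"
  then obtain \<mu>1 \<mu>2 where 1: "omega_eq f (\<lambda>w. \<Sum>L\<in>sorted_lists J n. \<mu>1 L * word (map c L) w)"
    and 2: "omega_eq g (\<lambda>w. \<Sum>L\<in>sorted_lists J n. \<mu>2 L * word (map c L) w)" unfolding in_sorted_span_def by blast
  have "omega_eq (\<lambda>w. f w + g w) (\<lambda>w. (\<Sum>L\<in>sorted_lists J n. \<mu>1 L * word (map c L) w) + (\<Sum>L\<in>sorted_lists J n. \<mu>2 L * word (map c L) w))"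
    by (rule omega_eq_add[OF 1 2])
  moreover have "(\<lambda>w. (\<Sum>L\<in>sorted_lists J n. \<mu>1 L * word (map c L) w) + (\<Sum>L\<in>sorted_lists J n. \<mu>2 L * word (map c L) w))
      = (\<lambda>w. \<Sum>L\<in>sorted_lists J n. (\<mu>1 L + \<mu>2 L) * word (map c L) w)"
    by (rule ext) (simp add: sum.distrib distrib_right)
  ultimately show ?thesis unfolding in_sorted_span_def by auto
qed

lemma in_sorted_span_scale: "in_sorted_span c J n f \<Longrightarrow> in_sorted_span c J n (\<lambda>w. a * f w)"
proof -
  assume "in_sorted_span c J n f"
  then obtain \<mu> where 1: "omega_eq f (\<lambda>w. \<Sum>L\<in>sorted_lists J n. \<mu> L * word (map c L) w)" unfolding in_sorted_span_def by blast
  have "omega_eq (\<lambda>w. a * f w) (\<lambda>w. a * (\<Sum>L\<in>sorted_lists J n. \<mu> L * word (map c L) w))" by (rule omega_eq_scale[OF 1])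
  moreover have "(\<lambda>w. a * (\<Sum>L\<in>sorted_lists J n. \<mu> L * word (map c L) w)) = (\<lambda>w. \<Sum>L\<in>sorted_lists J n. (a * \<mu> L) * word (map c L) w)"
    by (rule ext) (simp add: sum_distrib_left mult.assoc)
  ultimately show ?thesis unfolding in_sorted_span_def by auto
qed

lemma in_sorted_span_omega_eq: "omega_eq f g \<Longrightarrow> in_sorted_span c J n g \<Longrightarrow> in_sorted_span c J n f"
  unfolding in_sorted_span_def using omega_eq_trans by blast

lemma in_sorted_span_word: "finite J \<Longrightarrow> L0 \<in> sorted_lists J n \<Longrightarrow> in_sorted_span c J n (word (map c L0))"
proof -
  assume J: "finite J" and L0: "L0 \<in> sorted_lists J n"
  have "(\<lambda>w. \<Sum>L\<in>sorted_lists J n. (if L = L0 then 1 else 0) * word (map c L) w) = word (map c L0)"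
  proof (rule ext)
    fix w
    have "(\<Sum>L\<in>sorted_lists J n. (if L = L0 then 1 else 0) * word (map c L) w) = (\<Sum>L\<in>sorted_lists J n. if L = L0 then word (map c L) w else 0)"
      by (rule sum.cong) auto
    also have "\<dots> = word (map c L0) w" using finite_sorted_lists[OF J] L0 by (simp add: sum.delta')
    finally show "(\<Sum>L\<in>sorted_lists J n. (if L = L0 then 1 else 0) * word (map c L) w) = word (map c L0) w" .
  qed
  then show ?thesis unfolding in_sorted_span_def using omega_eq_refl by metis
qed

lemma in_sorted_span_sum: "finite I \<Longrightarrow> (\<forall>i\<in>I. in_sorted_span c J n (f i)) \<Longrightarrow> in_sorted_span c J n (\<lambda>w. \<Sum>i\<in>I. f i w)"
proof (induction I rule: finite_induct)
  case empty then show ?case using in_sorted_span_zero by simp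
next
  case (insert x F) then show ?case using in_sorted_span_add[of c J n "f x" "\<lambda>w. \<Sum>i\<in>F. f i w"] by simp
qed

lemma in_sorted_span_if_in_word_span: "finite J \<Longrightarrow> in_word_span (map c ` sorted_lists J n) f \<Longrightarrow> in_sorted_span c J n f"
proof -
  assume J: "finite J" and "in_word_span (map c ` sorted_lists J n) f"
  then obtain V \<mu> where V: "finite V" "V \<subseteq> map c ` sorted_lists J n" "omega_eq f (word_comb V \<mu>)" unfolding in_word_span_def by blast
  have "in_sorted_span c J n (word_comb V \<mu>)" unfolding word_comb_def
  proof (rule in_sorted_span_sum[OF V(1)], intro ballI in_sorted_span_scale)
    fix v assume "v \<in> V"
    then obtain L where "L \<in> sorted_lists J n" "v = map c L" using V(2) by blast
    then show "in_sorted_span c J n (word v)" using in_sorted_span_word[OF J] by simp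
  qed
  then show ?thesis using in_sorted_span_omega_eq[OF V(3)] by blast
qed

lemma sorted_lists_empty: "finite J \<Longrightarrow> card J < m \<Longrightarrow> sorted_lists J m = {}"
proof (rule ccontr)
  assume J: "finite J" and m: "card J < m" and "sorted_lists J m \<noteq> {}"
  then obtain L where L: "sorted_wrt (<) L" "set L \<subseteq> J" "length L = m" unfolding sorted_lists_def by blast
  have "distinct L" using L(1) by (simp add: strict_sorted_iff)
  then have "card (set L) = m" using L(3) by (simp add: distinct_card)
  moreover have "card (set L) \<le> card J" using L(2) J by (rule card_mono[rotated])
  ultimately show False using m by simp
qed

section \<open>The annihilator\<close>

lemma long_word_in_rels:
  fixes c :: "nat \<Rightarrow> 'a::field"
  assumes w: "\<forall>x\<in>set w. in_word_span (singleton_words (c ` J)) (word [x])" and J: "finite J" and len: "card J < length w"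
  shows "word w \<in> rels"
proof -
  have "in_word_span {v. set v \<subseteq> c ` J \<and> length v = length w} (word w)"
    by (rule in_word_span_lists) (use w in \<open>simp add: singleton_words_def\<close>)
  then have "in_word_span (map c ` sorted_lists J (length w)) (word w)" by (rule in_word_span_sorted)
  then have "in_word_span {} (word w)" using sorted_lists_empty[OF J len] by simp
  then obtain V \<mu> where "V \<subseteq> {}" "omega_eq (word w) (word_comb V \<mu>)" unfolding in_word_span_def by blast
  then have "omega_eq (word w) (word_comb {} \<mu>)" by simp
  then show ?thesis unfolding word_comb_def by (simp add: omega_eq_0_iff)
qed

lemma sorted_list_of_set_strict_sorted: "sorted_wrt (<) l \<Longrightarrow> sorted_list_of_set (set l) = l"
  by (simp add: sorted_list_of_set_sort_remdups strict_sorted_iff distinct_remdups_id sorted_sort_id)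

lemma fmul_word_middle_rels:
  assumes uv: "word (u @ v) \<in> rels" and \<eta>: "finite {w. \<eta> w \<noteq> 0}"
  shows "fmul (fmul (word u) \<eta>) (word v) \<in> rels"
proof -
  define W where "W = {w. \<eta> w \<noteq> 0}"
  have "word (u @ y @ v) \<in> rels" for y
  proof -
    from omega_eq_move_block[of u y v "[]"] obtain \<sigma> where
      m: "omega_eq (word (u @ y @ v)) (\<lambda>w. \<sigma> * word (u @ v @ y) w)" by auto
    have "word (u @ v @ y) = fmul (word (u @ v)) (word y)" by (simp add: fmul_word_word)
    then have "word (u @ v @ y) \<in> rels" using rels_fmul_word_right[OF uv] by simp
    then show ?thesis by (rule rels_if_omega_eq_scaled[OF m])
  qed
  then have "(\<lambda>x. \<Sum>y\<in>W. \<eta> y * word (u @ y @ v) x) \<in> rels"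
    using \<eta> unfolding W_def by (intro rels_sum) (auto intro: rels.smul)
  moreover have "fmul (fmul (word u) \<eta>) (word v) = (\<lambda>x. \<Sum>y\<in>W. \<eta> y * word (u @ y @ v) x)"
  proof -
    have "fmul (fmul (word u) \<eta>) (word v) = fmul (word u) (fmul (word_comb W \<eta>) (word v))"
      unfolding fmul_assoc_word_word W_def word_comb_support_self[OF \<eta>] ..
    then show ?thesis unfolding word_comb_def fmul_sum_left fmul_sum_right fmul_word_word by simp
  qed
  ultimately show ?thesis by simp
qed

context char_p begin

lemma in_ann_long_wedges_iff:
  fixes a :: "nat \<Rightarrow> 'a" and S :: "'a set"
  assumes dA: "\<forall>y\<in>Fp_adj S. in_word_span (singleton_words (a ` {1..k})) (word [y])" and r: "k < r"
  shows "in_ann n (wedge_dS r S) \<omega> \<longleftrightarrow> \<omega> \<in> Om n"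
proof
  assume "in_ann n (wedge_dS r S) \<omega>" then show "\<omega> \<in> Om n" unfolding in_ann_def by blast
next
  assume om: "\<omega> \<in> Om n"
  show "in_ann n (wedge_dS r S) \<omega>" unfolding in_ann_def
  proof (intro conjI ballI om)
    fix u assume "u \<in> wedge_dS r S"
    then obtain ss where ss: "u = word ss" "length ss = r" "set ss \<subseteq> S" unfolding wedge_dS_def by blast
    have "word ss \<in> rels"
    proof (rule long_word_in_rels)
      show "\<forall>x\<in>set ss. in_word_span (singleton_words (a ` {1..k})) (word [x])" using ss(3) subset_Fp_adj[of S] dA by blast
      show "finite {1..k}" by simp
      show "card {1..k} < length ss" using ss r by simp
    qed
    then show "omega_eq (fmul \<omega> u) (\<lambda>_. 0)" unfolding ss(1)
      by (intro omega_eq_fmul_0_right Om_finite_support[OF om]) (simp add: omega_eq_0_iff)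
  qed
qed

lemma in_sum_part_imp_in_ann:
  fixes a :: "nat \<Rightarrow> 'a" and S :: "'a set"
  assumes dA: "\<forall>y\<in>Fp_adj S. in_word_span (singleton_words (a ` {1..k})) (word [y])" and AS: "a ` {1..k} \<subseteq> Fp_adj S"
    and r: "r \<in> {1..k}" and t: "t = k - r + 1"
    and sp: "in_sum_part n a k t \<omega>"
  shows "in_ann n (wedge_dS r S) \<omega>"
proof -
  define II where "II = {I. I \<subseteq> {1..k} \<and> card I = t}"
  from sp obtain \<eta> where om: "\<omega> \<in> Om n" and eta: "\<forall>I. I \<subseteq> {1..k} \<and> card I = t \<longrightarrow> \<eta> I \<in> Om (n - int t)"
    and e: "omega_eq \<omega> (\<lambda>w. \<Sum>I\<in>II. fmul (word (map a (sorted_list_of_set I))) (\<eta> I) w)"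
    unfolding in_sum_part_def II_def by blast
  have finII: "finite II" unfolding II_def by simp
  show ?thesis unfolding in_ann_def
  proof (intro conjI ballI om)
    fix u assume "u \<in> wedge_dS r S"
    then obtain ss where ss: "u = word ss" "length ss = r" "set ss \<subseteq> S" unfolding wedge_dS_def by blast
    have T: "fmul (fmul (word (map a (sorted_list_of_set I))) (\<eta> I)) (word ss) \<in> rels" if I: "I \<in> II" for I
    proof (rule fmul_word_middle_rels)
      have Ik: "I \<subseteq> {1..k}" "card I = t" using I unfolding II_def by auto
      then have fI: "finite I" using finite_subset by blast
      show "finite {w. \<eta> I w \<noteq> 0}" using eta Ik by (blast intro: Om_finite_support)
      show "word (map a (sorted_list_of_set I) @ ss) \<in> rels"
      proof (rule long_word_in_rels)
        have "set (map a (sorted_list_of_set I)) \<subseteq> a ` {1..k}" using Ik fI by auto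
        then show "\<forall>x\<in>set (map a (sorted_list_of_set I) @ ss). in_word_span (singleton_words (a ` {1..k})) (word [x])"
          using dA AS ss(3) subset_Fp_adj[of S] by auto
        show "card {1..k} < length (map a (sorted_list_of_set I) @ ss)" using Ik fI ss(2) t r by simp
      qed simp
    qed
    have "fmul (\<lambda>w. \<Sum>I\<in>II. fmul (word (map a (sorted_list_of_set I))) (\<eta> I) w) (word ss) \<in> rels"
      unfolding fmul_sum_left_unscaled using finII T by (intro rels_sum) auto
    then have "omega_eq (fmul (\<lambda>w. \<Sum>I\<in>II. fmul (word (map a (sorted_list_of_set I))) (\<eta> I) w) (word ss)) (\<lambda>_. 0)"
      by (simp add: omega_eq_0_iff)
    then show "omega_eq (fmul \<omega> u) (\<lambda>_. 0)" unfolding ss(1)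
      using omega_eq_trans[OF omega_eq_fmul_word_right[OF e]] by blast
  qed
qed

end

lemma extend_enumeration:
  fixes a :: "nat \<Rightarrow> 'b"
  assumes inj: "inj_on a {1..k}" and B: "finite B" "B \<inter> a ` {1..k} = {}"
  obtains c m where "k \<le> m" "\<forall>i\<in>{1..k}. c i = a i" "c ` {1..m} = a ` {1..k} \<union> B" "inj_on c {1..m}"
proof -
  obtain bs where bs: "set bs = B" "distinct bs" using finite_distinct_list[OF B(1)] by blast
  define m where "m = k + length bs"
  define c where "c i = (if i \<le> k then a i else bs ! (i - k - 1))" for i
  have "c ` {1..m} \<subseteq> a ` {1..k} \<union> B"
    using bs(1) unfolding c_def m_def by (auto intro!: nth_mem)
  moreover have "a ` {1..k} \<subseteq> c ` {1..m}" unfolding c_def m_def by force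
  moreover have "B \<subseteq> c ` {1..m}"
  proof
    fix b assume "b \<in> B"
    then obtain j where j: "j < length bs" "b = bs ! j" using bs(1) by (auto simp: in_set_conv_nth)
    then have "c (k + 1 + j) = b" unfolding c_def by simp
    with j show "b \<in> c ` {1..m}" unfolding m_def by (intro image_eqI[of _ _ "k + 1 + j"]) auto
  qed
  ultimately have img: "c ` {1..m} = a ` {1..k} \<union> B" by blast
  have "card (a ` {1..k}) = k" using card_image[OF inj] by simp
  moreover have "card B = length bs" using bs distinct_card by metis
  ultimately have "card (a ` {1..k} \<union> B) = m"
    unfolding m_def using B card_Un_disjoint[of "a ` {1..k}" B] by (simp add: Int_commute)
  then have "card (c ` {1..m}) = card {1..m}" unfolding img by simp
  then have "inj_on c {1..m}" by (simp add: inj_on_iff_eq_card)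
  moreover have "\<forall>i\<in>{1..k}. c i = a i" unfolding c_def by simp
  ultimately show ?thesis using img by (intro that[where c = c and m = m]) (simp_all add: m_def)
qed

context char_p begin

lemma dual_derivations_exist:
  fixes c :: "nat \<Rightarrow> 'a"
  assumes C: "p_irredundant (c ` J)" and inj: "inj_on c J"
  shows "\<exists>D. dual_derivations D c J"
proof -
  have "\<forall>j\<in>J. \<exists>D. derivation_on UNIV D \<and> D (c j) = 1 \<and> (\<forall>y\<in>c ` J. y \<noteq> c j \<longrightarrow> D y = 0)"
    using p_irredundant_dual_derivation[OF C] by blast
  then obtain D where D: "\<And>j. j \<in> J \<Longrightarrow>
      derivation_on UNIV (D j) \<and> D j (c j) = 1 \<and> (\<forall>y\<in>c ` J. y \<noteq> c j \<longrightarrow> D j y = 0)"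
    by metis
  have "D i (c j) = (if i = j then 1 else 0)" if "i \<in> J" "j \<in> J" for i j
    using D[OF that(1)] inj_onD[OF inj _ that(2) that(1)] that by auto
  then have "dual_derivations D c J" using D by unfold_locales auto
  then show ?thesis by (rule exI[of _ D])
qed

lemma in_sorted_span_Om:
  fixes c :: "nat \<Rightarrow> 'a"
  assumes J: "finite J" and om: "\<omega> \<in> Om (int N)"
    and letters: "\<forall>w. \<omega> w \<noteq> 0 \<longrightarrow> set w \<subseteq> Fp_adj (c ` J)"
  shows "in_sorted_span c J N \<omega>"
proof -
  define W where "W = {w. \<omega> w \<noteq> 0}"
  have finW: "finite W" unfolding W_def by (rule Om_finite_support[OF om])
  have "in_sorted_span c J N (word w)" if w: "w \<in> W" for w
  proof -
    have "length w = N" using w om unfolding W_def Om_def by auto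
    moreover have "in_word_span {v. set v \<subseteq> c ` J \<and> length v = length w} (word w)"
      using w letters Fp_adj_d_in_span[of "c ` J"]
      by (intro in_word_span_lists) (auto simp: singleton_words_def W_def)
    ultimately show ?thesis using in_sorted_span_if_in_word_span[OF J] in_word_span_sorted by blast
  qed
  then have "in_sorted_span c J N (word_comb W \<omega>)"
    unfolding word_comb_def using finW by (intro in_sorted_span_sum in_sorted_span_scale ballI)
  then show ?thesis unfolding W_def using word_comb_support_self[OF Om_finite_support[OF om]] by simp
qed

lemma sorted_coordinates:
  fixes a :: "nat \<Rightarrow> 'a" and \<omega> :: "'a list \<Rightarrow> 'a"
  assumes pA: "p_irredundant (a ` {1..k})" and inj: "inj_on a {1..k}" and om: "\<omega> \<in> Om (int N)"
  obtains m c D \<mu> where "k \<le> m" "\<forall>i\<in>{1..k}. c i = a i" "dual_derivations D c {1..m}"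
    "omega_eq \<omega> (\<lambda>w. \<Sum>L\<in>sorted_lists {1..m} N. \<mu> L * word (map c L) w)"
proof -
  define X where "X = (\<Union>w\<in>{w. \<omega> w \<noteq> 0}. set w)"
  have "finite X" unfolding X_def using Om_finite_support[OF om] by simp
  from p_irredundant_extend[OF this pA] obtain B where B: "finite B" "B \<inter> a ` {1..k} = {}"
    "p_irredundant (a ` {1..k} \<union> B)" "X \<subseteq> Fp_adj (a ` {1..k} \<union> B)"
    by (elim exE conjE) (rule that)
  obtain c m where c: "k \<le> m" "\<forall>i\<in>{1..k}. c i = a i" "c ` {1..m} = a ` {1..k} \<union> B"
    "inj_on c {1..m}" by (rule extend_enumeration[OF inj B(1,2)]) (rule that)
  have "p_irredundant (c ` {1..m})" using B(3) c(3) by simp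
  from dual_derivations_exist[OF this c(4)] obtain D where D: "dual_derivations D c {1..m}"
    by (elim exE) (rule that)
  have "in_sorted_span c {1..m} N \<omega>"
    using B(4) c(3) unfolding X_def by (intro in_sorted_span_Om[OF _ om]) auto
  then obtain \<mu> where "omega_eq \<omega> (\<lambda>w. \<Sum>L\<in>sorted_lists {1..m} N. \<mu> L * word (map c L) w)"
    unfolding in_sorted_span_def by (elim exE) (rule that)
  with c(1,2) D show ?thesis by (rule that)
qed

lemma sorted_coeff_eq_0_if_missing:
  fixes a :: "nat \<Rightarrow> 'a" and S :: "'a set"
  assumes ds: "dual_derivations D c {1..m}" and km: "k \<le> m" and ca: "\<forall>i\<in>{1..k}. c i = a i"
    and om: "omega_eq \<omega> (\<lambda>w. \<Sum>L\<in>sorted_lists {1..m} N. \<mu> L * word (map c L) w)"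
    and ann: "\<And>ss. length ss = r \<Longrightarrow> set ss \<subseteq> S \<Longrightarrow> omega_eq (fmul \<omega> (word ss)) (\<lambda>_. 0)"
    and dS: "\<forall>i\<in>{1..k}. in_word_span (singleton_words S) (word [a i])"
    and fin: "finite {w. \<omega> w \<noteq> 0}"
    and L: "L \<in> sorted_lists {1..m} N" and card: "r \<le> card ({1..k} - set L)"
  shows "\<mu> L = 0"
proof -
  interpret dual_derivations D c "{1..m}" by (rule ds)
  obtain K where K: "K \<subseteq> {1..k} - set L" "card K = r" "finite K"
    using obtain_subset_with_card_n[OF card] by blast
  define KL where "KL = sorted_list_of_set K"
  have KLs: "sorted_wrt (<) KL" unfolding KL_def by simp
  have KLset: "set KL = K" unfolding KL_def using K(3) by simp
  have KLlen: "length KL = r" unfolding KL_def using K by simp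
  have KLJ: "set KL \<subseteq> {1..m}" using KLset K(1) km by auto
  have disj: "set KL \<inter> set L = {}" using KLset K(1) by blast
  have mc: "map c KL = map a KL" using ca KLset K(1) by (auto intro!: map_cong)
  have "in_word_span {v. set v \<subseteq> S \<and> length v = length (map a KL)} (word (map a KL))"
  proof (rule in_word_span_lists)
    show "\<forall>x\<in>set (map a KL). in_word_span {[y] |y. y \<in> S} (word [x])"
      using dS KLset K(1) unfolding singleton_words_def by auto
  qed
  then obtain V \<nu> where V: "finite V" "V \<subseteq> {v. set v \<subseteq> S \<and> length v = r}"
    "omega_eq (word (map a KL)) (word_comb V \<nu>)" unfolding in_word_span_def using KLlen by auto
  have e1: "omega_eq (fmul (word_comb {w. \<omega> w \<noteq> 0} \<omega>) (word (map a KL))) (fmul (word_comb {w. \<omega> w \<noteq> 0} \<omega>) (word_comb V \<nu>))"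
    by (rule omega_eq_fmul_word_comb_left[OF fin V(3)])
  have e2: "fmul \<omega> (word_comb V \<nu>) = (\<lambda>w. \<Sum>v\<in>V. \<nu> v * fmul \<omega> (word v) w)"
    unfolding word_comb_def fmul_sum_right ..
  have e3: "omega_eq (\<lambda>w. \<Sum>v\<in>V. \<nu> v * fmul \<omega> (word v) w) (\<lambda>w. \<Sum>v\<in>V. \<nu> v * 0)"
  proof (rule omega_eq_sum[OF V(1)], intro ballI)
    fix v assume "v \<in> V"
    then have "omega_eq (fmul \<omega> (word v)) (\<lambda>_. 0)" using V(2) ann by blast
    from omega_eq_scale[OF this, of "\<nu> v"] show "omega_eq (\<lambda>w. \<nu> v * fmul \<omega> (word v) w) (\<lambda>w. \<nu> v * 0)" by simp
  qed
  have "omega_eq (fmul \<omega> (word (map c KL))) (\<lambda>_. 0)"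
    using omega_eq_trans[OF e1[unfolded word_comb_support_self[OF fin] e2] e3] unfolding mc by simp
  from sorted_coeff_eq_0_if_annihilates[OF _ om KLs KLJ L disj this] show ?thesis by simp
qed

lemma card_missing_if_not_prefix:
  fixes L :: "nat list"
  assumes Ls: "sorted_wrt (<) L" and LJ: "set L \<subseteq> {1..m}" and t: "1 \<le> t" "t \<le> k" and r: "r = k - t + 1"
    and bad: "\<not> (t \<le> length L \<and> set (take t L) \<subseteq> {1..k})"
  shows "r \<le> card ({1..k} - set L)"
proof -
  have dL: "distinct L" using Ls by (simp add: strict_sorted_iff)
  have cb: "card (set L \<inter> {1..k}) \<le> t - 1"
  proof (cases "length L < t")
    case True
    have "card (set L \<inter> {1..k}) \<le> card (set L)" by (rule card_mono) auto
    also have "\<dots> = length L" using dL by (simp add: distinct_card)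
    finally show ?thesis using True by simp
  next
    case False
    then have "\<not> set (take t L) \<subseteq> {1..k}" using bad by simp
    then obtain x where x: "x \<in> set (take t L)" "x \<notin> {1..k}" by blast
    then obtain i where i: "i < length (take t L)" "take t L ! i = x" by (metis in_set_conv_nth)
    have it: "i < t" "i < length L" using i by auto
    have Li: "L ! i = x" using i by simp
    have "x \<in> set L" using x(1) by (meson in_set_takeD)
    then have "1 \<le> x" using LJ by auto
    then have xk: "k < x" using x(2) by auto
    have "set L \<inter> {1..k} \<subseteq> (\<lambda>j. L ! j) ` {..<i}"
    proof
      fix y assume y: "y \<in> set L \<inter> {1..k}"
      then obtain j where j: "j < length L" "L ! j = y" by (metis IntD1 in_set_conv_nth)
      have "j < i"
      proof (rule ccontr)
        assume "\<not> j < i"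
        then have "i \<le> j" by simp
        then have "L ! i \<le> L ! j"
          using sorted_wrt_nth_less[OF Ls, of i j] j(1) by (cases "i = j") auto
        then show False using Li xk j y by auto
      qed
      then show "y \<in> (\<lambda>j. L ! j) ` {..<i}" using j by blast
    qed
    then have "card (set L \<inter> {1..k}) \<le> card ((\<lambda>j. L ! j) ` {..<i})" by (rule card_mono[rotated]) simp
    also have "\<dots> \<le> card {..<i}" by (rule card_image_le) simp
    finally show ?thesis using it by simp
  qed
  have "card ({1..k} - set L) = card {1..k} - card ({1..k} \<inter> set L)"
    by (rule card_Diff_subset_Int) simp
  also have "{1..k} \<inter> set L = set L \<inter> {1..k}" by blast
  finally have "card ({1..k} - set L) = k - card (set L \<inter> {1..k})" by simp
  then show ?thesis using cb r t by linarith
qed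

end

lemma sum_words_in_Om:
  assumes "finite S" "\<forall>L\<in>S. length (f L) = N"
  shows "(\<lambda>w. \<Sum>L\<in>S. \<mu> L * word (f L) w) \<in> Om (int N)"
proof -
  have sub: "{w. (\<Sum>L\<in>S. \<mu> L * word (f L) w) \<noteq> 0} \<subseteq> f ` S" by (rule support_sum_words)
  then have "finite {w. (\<Sum>L\<in>S. \<mu> L * word (f L) w) \<noteq> 0}"
    using assms(1) by (rule finite_subset[OF _ finite_imageI])
  with sub assms(2) show ?thesis unfolding Om_def by auto
qed

lemma map_sorted_prefix:
  assumes L: "sorted_wrt (<) L" "set (take t L) \<subseteq> {1..k}" and ca: "\<forall>i\<in>{1..k}. c i = a i"
  shows "map a (sorted_list_of_set (set (take t L))) @ map c (drop t L) = map c L"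
proof -
  have "sorted_list_of_set (set (take t L)) = take t L"
    by (rule sorted_list_of_set_strict_sorted) (rule sorted_wrt_take[OF L(1)])
  moreover have "map a (take t L) = map c (take t L)" using L(2) ca by (auto intro!: map_cong)
  ultimately show ?thesis by (metis append_take_drop_id map_append)
qed

(* Group the sorted words by the set of their first t letters. *)
lemma sorted_sum_in_sum_part:
  fixes a c :: "nat \<Rightarrow> 'a::field"
  assumes ca: "\<forall>i\<in>{1..k}. c i = a i" and J: "finite J"
    and prefix: "\<And>L. L \<in> sorted_lists J N \<Longrightarrow> \<mu> L \<noteq> 0 \<Longrightarrow> t \<le> length L \<and> set (take t L) \<subseteq> {1..k}"
  shows "in_sum_part (int N) a k t (\<lambda>w. \<Sum>L\<in>sorted_lists J N. \<mu> L * word (map c L) w)"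
proof -
  define II where "II = {I. I \<subseteq> {1..k} \<and> card I = t}"
  define G where "G = {L \<in> sorted_lists J N. t \<le> length L \<and> set (take t L) \<subseteq> {1..k}}"
  define \<eta> where "\<eta> I = (\<lambda>w. \<Sum>L\<in>{L \<in> G. set (take t L) = I}. \<mu> L * word (map c (drop t L)) w)" for I
  have finSL: "finite (sorted_lists J N)" by (rule finite_sorted_lists[OF J])
  then have finG: "finite G" unfolding G_def by simp
  have \<eta>: "\<eta> I \<in> Om (int N - int t)" for I
  proof (cases "t \<le> N")
    case True
    have "finite {L \<in> G. set (take t L) = I}" using finG by simp
    then have "\<eta> I \<in> Om (int (N - t))" unfolding \<eta>_def
      by (rule sum_words_in_Om) (auto simp: G_def sorted_lists_def)
    then show ?thesis using True by (simp add: of_nat_diff)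
  next
    case False
    then have "{L \<in> G. set (take t L) = I} = {}" unfolding G_def sorted_lists_def by auto
    then have "\<eta> I = (\<lambda>_. 0)" unfolding \<eta>_def by (simp only: sum.empty)
    then show ?thesis using False unfolding Om_def by simp
  qed
  have "fmul (word (map a (sorted_list_of_set I))) (\<eta> I)
      = (\<lambda>w. \<Sum>L\<in>{L \<in> G. set (take t L) = I}. \<mu> L * word (map c L) w)" for I
    unfolding \<eta>_def fmul_sum_right fmul_word_word
    by (intro ext sum.cong refl) (auto simp: G_def sorted_lists_def map_sorted_prefix[OF _ _ ca])
  then have "(\<lambda>w. \<Sum>I\<in>II. fmul (word (map a (sorted_list_of_set I))) (\<eta> I) w)
      = (\<lambda>w. \<Sum>I\<in>II. \<Sum>L\<in>{L \<in> G. set (take t L) = I}. \<mu> L * word (map c L) w)" by simp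
  also have "\<dots> = (\<lambda>w. \<Sum>L\<in>G. \<mu> L * word (map c L) w)"
  proof (rule ext, rule sum.group[OF finG])
    show "finite II" unfolding II_def by simp
    have "card (set (take t L)) = t" if "L \<in> G" for L
      using that distinct_card[of "take t L"] unfolding G_def sorted_lists_def
      by (auto simp: strict_sorted_iff dest: distinct_take)
    then show "(\<lambda>L. set (take t L)) ` G \<subseteq> II" unfolding II_def G_def by auto
  qed
  also have "\<dots> = (\<lambda>w. \<Sum>L\<in>sorted_lists J N. \<mu> L * word (map c L) w)"
    using prefix unfolding G_def by (intro ext sum.mono_neutral_left[OF finSL]) auto
  finally have eq: "(\<lambda>w. \<Sum>I\<in>II. fmul (word (map a (sorted_list_of_set I))) (\<eta> I) w)
      = (\<lambda>w. \<Sum>L\<in>sorted_lists J N. \<mu> L * word (map c L) w)" .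
  have "(\<lambda>w. \<Sum>L\<in>sorted_lists J N. \<mu> L * word (map c L) w) \<in> Om (int N)"
    using finSL by (rule sum_words_in_Om) (simp add: sorted_lists_def)
  with \<eta> eq show ?thesis unfolding in_sum_part_def II_def
    by (intro conjI exI[of _ \<eta>]) (simp_all add: omega_eq_refl)
qed

lemma in_sum_part_omega_eq:
  assumes "\<omega> \<in> Om n" "omega_eq \<omega> \<omega>'" "in_sum_part n a k t \<omega>'"
  shows "in_sum_part n a k t \<omega>"
  using assms omega_eq_trans unfolding in_sum_part_def by meson

lemma in_sum_part_0:
  assumes "n < 0"
  shows "in_sum_part n a k t (\<lambda>_. 0)"
  unfolding in_sum_part_def using assms
  by (intro conjI exI[of _ "\<lambda>_ _. 0"]) (simp_all add: Om_def fmul_zero_right omega_eq_refl)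

context char_p begin

lemma in_ann_imp_in_sum_part:
  fixes a :: "nat \<Rightarrow> 'a" and S :: "'a set"
  assumes pA: "p_irredundant (a ` {1..k})" and inj: "inj_on a {1..k}"
    and dS: "\<forall>y\<in>Fp_adj S. in_word_span (singleton_words S) (word [y])" and AS: "a ` {1..k} \<subseteq> Fp_adj S"
    and r: "r \<in> {1..k}" and t: "t = k - r + 1"
    and ann: "in_ann n (wedge_dS r S) \<omega>"
  shows "in_sum_part n a k t \<omega>"
proof -
  have om: "\<omega> \<in> Om n" using ann unfolding in_ann_def by blast
  show ?thesis
  proof (cases "n < 0")
    case True
    then have "\<omega> = (\<lambda>_. 0)" using om unfolding Om_def by simp
    with in_sum_part_0[OF True] show ?thesis by simp
  next
    case False
    define N where "N = nat n"
    have nN: "n = int N" using False unfolding N_def by simp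
    show ?thesis
    proof (rule sorted_coordinates[OF pA inj om[unfolded nN]])
      fix m c D \<mu>
      assume C: "k \<le> m" "\<forall>i\<in>{1..k}. c i = a i" "dual_derivations D c {1..m}"
        "omega_eq \<omega> (\<lambda>w. \<Sum>L\<in>sorted_lists {1..m} N. \<mu> L * word (map c L) w)"
      have "t \<le> length L \<and> set (take t L) \<subseteq> {1..k}" if L: "L \<in> sorted_lists {1..m} N" "\<mu> L \<noteq> 0" for L
      proof (rule ccontr)
        assume bad: "\<not> (t \<le> length L \<and> set (take t L) \<subseteq> {1..k})"
        have "sorted_wrt (<) L" "set L \<subseteq> {1..m}" using L(1) by (simp_all add: sorted_lists_def)
        moreover have "1 \<le> t" "t \<le> k" "r = k - t + 1" using r t by auto
        ultimately have card: "r \<le> card ({1..k} - set L)" by (rule card_missing_if_not_prefix[OF _ _ _ _ _ bad])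
        have annv: "omega_eq (fmul \<omega> (word ss)) (\<lambda>_. 0)" if "length ss = r" "set ss \<subseteq> S" for ss
          using ann that unfolding in_ann_def wedge_dS_def by blast
        have dsk: "\<forall>i\<in>{1..k}. in_word_span (singleton_words S) (word [a i])" using dS AS by auto
        have "\<mu> L = 0"
          by (rule sorted_coeff_eq_0_if_missing[OF C(3,1,2,4) annv dsk Om_finite_support[OF om] L(1) card])
        with L(2) show False by simp
      qed
      then have "in_sum_part (int N) a k t (\<lambda>w. \<Sum>L\<in>sorted_lists {1..m} N. \<mu> L * word (map c L) w)"
        by (intro sorted_sum_in_sum_part[OF C(2)]) simp_all
      with om C(4) show ?thesis unfolding nN by (rule in_sum_part_omega_eq)
    qed
  qed
qed

end

theorem proposition3p5:
  fixes S :: "'a::field set" and a :: "nat \<Rightarrow> 'a" and k :: nat and n :: int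
  assumes "CHAR('a) > 0"
    and "S \<noteq> {}"
    and "pdeg_eq S k"
    and "inj_on a {1..k}"
    and "p_basis (Fp_adj S) (a ` {1..k})"
  shows "(\<forall>r\<in>{1..k}. \<forall>\<omega>. in_ann n (wedge_dS r S) \<omega> \<longleftrightarrow> in_sum_part n a k (k - r + 1) \<omega>)
       \<and> (\<forall>r>k. \<forall>\<omega>. in_ann n (wedge_dS r S) \<omega> \<longleftrightarrow> \<omega> \<in> Om n)"
proof -
  interpret char_p "TYPE('a)" using assms(1) by unfold_locales
  have AS: "a ` {1..k} \<subseteq> Fp_adj S" and "p_independent (a ` {1..k})"
    and FA: "Fp_adj (a ` {1..k}) = Fp_adj S"
    using assms(5) unfolding p_basis_def by auto
  then have pA: "p_irredundant (a ` {1..k})" by (simp add: p_independent_imp_p_irredundant)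
  have dA: "\<forall>y\<in>Fp_adj S. in_word_span (singleton_words (a ` {1..k})) (word [y])"
    using Fp_adj_d_in_span[of "a ` {1..k}"] FA by auto
  have dS: "\<forall>y\<in>Fp_adj S. in_word_span (singleton_words S) (word [y])"
    using Fp_adj_d_in_span[of S] by auto
  show ?thesis
  proof (intro conjI ballI allI impI)
    fix r \<omega> assume r: "r \<in> {1..k}"
    show "in_ann n (wedge_dS r S) \<omega> \<longleftrightarrow> in_sum_part n a k (k - r + 1) \<omega>"
      using in_ann_imp_in_sum_part[OF pA assms(4) dS AS r refl] in_sum_part_imp_in_ann[OF dA AS r refl] ..
  next
    fix r :: nat and \<omega> assume "k < r"
    then show "in_ann n (wedge_dS r S) \<omega> \<longleftrightarrow> \<omega> \<in> Om n" by (rule in_ann_long_wedges_iff[OF dA])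
  qed
qed

end
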